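(* Let $f(x_1,\dots,x_M)=\sum_{\mathbf i\in\mathscr S}p_{\mathbf i}f_{i_1}(x_1)\cdots f_{i_M}(x_M)$ be an $\mathrm{MMEam}$ density, and fix $\mathbf n=(n_1,\dots,n_M)\in\mathbb{N}_0^M$ and $\boldsymbol\lambda=(\lambda_1,\dots,\lambda_M)$ with $\lambda_k\ge0$. Define the size-biased Esscher transform $$f^{\mathrm{ET}}_{\mathbf n,\boldsymbol\lambda}(x_1,\dots,x_M)=\frac{1}{C^{\mathrm{ET}}_{\mathbf n,\boldsymbol\lambda}}x_1^{n_1}\cdots x_M^{n_M}e^{-\lambda_1x_1-\cdots-\lambda_Mx_M}f(x_1,\dots,x_M),$$ with $C^{\mathrm{ET}}_{\mathbf n,\boldsymbol\lambda}=\int_{[0,\infty)^M}y_1^{n_1}\cdots y_M^{n_M}e^{-\sum\lambda_ky_k}f(y)\,dy$ (assumed nonzero). Then $f^{\mathrm{ET}}_{\mathbf n,\boldsymbol\lambda}\in\mathrm{MMEam}$ and $$f^{\mathrm{ET}}_{\mathbf n,\boldsymbol\lambda}(x_1,\dots,x_M)=\sum_{\mathbf i\in\mathscr S}p^{\mathrm{ET}}_{\mathbf n,\boldsymbol\lambda,\mathbf i}f^{\mathrm{ET}}_{n_1,\lambda_1,i_1}(x_1)\cdots f^{\mathrm{ET}}_{n_M,\lambda_M,i_M}(x_M),$$ where for $n\in\mathbb N_0$, $\lambda\ge0$, $1\le j\le L$, $$f^{\mathrm{ET}}_{n,\lambda,j}(x)=\Big(\frac{n!}{C^{\mathrm{ET}}_{n,\lambda,j}}\alpha_j^{[n]}\Big)e^{T_j^{[n,\lambda]}x}t_j^{[n]},\qquad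 C^{\mathrm{ET}}_{n,\lambda,j}=n!\,\alpha_j(\lambda I-T_j)^{-(n+1)}t_j,$$ with $\alpha_j^{[n]}=(\alpha_j,0,\dots,0)$ and $t_j^{[n]}=(0,\dots,0,t_j^\top)^\top$ (each with $n+1$ blocks), and $$p^{\mathrm{ET}}_{\mathbf n,\boldsymbol\lambda,\mathbf i}=p_{\mathbf i}\frac{C^{\mathrm{ET}}_{n_1,\lambda_1,i_1}\cdots C^{\mathrm{ET}}_{n_M,\lambda_M,i_M}}{C^{\mathrm{ET}}_{\mathbf n,\boldsymbol\lambda}},\qquad C^{\mathrm{ET}}_{\mathbf n,\boldsymbol\lambda}=\sum_{\mathbf i\in\mathscr S}p_{\mathbf i}C^{\mathrm{ET}}_{n_1,\lambda_1,i_1}\cdots C^{\mathrm{ET}}_{n_M,\lambda_M,i_M}.$$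
   Context: An ME density is a probability density on $[0,\infty)$ of the form $g(x)=\alpha e^{Tx}t$ ($\alpha$ real row vector, $T$ real square matrix, $t$ real column vector); triples are taken with all eigenvalues of $T$ having strictly negative real part. MMEam: fix $L,M\in\mathbb N_+$ and ME densities $f_1,\dots,f_L$ with triples $(\alpha_j,T_j,t_j)$. Let $\mathscr S=\{1,\dots,L\}^M$, $\mathbf i=(i_1,\dots,i_M)$, and real numbers $p_{\mathbf i}$ (possibly negative) with $\sum p_{\mathbf i}=1$; $f(x)=\sum_{\mathbf i}p_{\mathbf i}f_{i_1}(x_1)\cdots f_{i_M}(x_M)$ on $[0,\infty)^M$ is an MMEam density if $f\ge0$, and $\mathrm{MMEam}$ is the class of such densities. For a $p\times p$ matrix $T$, $T^{[n,\lambda]}$ denotes the $(n+1)\times(n+1)$ block matrix with $T-\lambda I$ on each diagonal block, $I$ on each block immediately above the diagonal, and zeros elsewhere. *)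

theory Defs
  imports "HOL-Analysis.Analysis" "Jordan_Normal_Form.Char_Poly" "Jordan_Normal_Form.Gauss_Jordan_Elimination"
begin

definition mexp :: "real mat \<Rightarrow> real mat" where
  "mexp A = mat (dim_row A) (dim_col A) (\<lambda>(i,j). \<Sum>k. (A ^\<^sub>m k) $$ (i,j) / fact k)"

definition me_fun :: "real vec \<Rightarrow> real mat \<Rightarrow> real vec \<Rightarrow> real \<Rightarrow> real" where
  "me_fun \<alpha> T t x = \<alpha> \<bullet> (mexp (x \<cdot>\<^sub>m T) *\<^sub>v t)"

definition me_triple :: "real vec \<Rightarrow> real mat \<Rightarrow> real vec \<Rightarrow> bool" where
  "me_triple \<alpha> T t \<longleftrightarrow>
     T \<in> carrier_mat (dim_row T) (dim_row T) \<and> \<alpha> \<in> carrier_vec (dim_row T) \<and>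
     t \<in> carrier_vec (dim_row T) \<and>
     (\<forall>z. eigenvalue (map_mat complex_of_real T) z \<longrightarrow> Re z < 0)"

definition prob_density_nonneg :: "(real \<Rightarrow> real) \<Rightarrow> bool" where
  "prob_density_nonneg g \<longleftrightarrow> (\<forall>x\<ge>0. 0 \<le> g x) \<and> set_integrable lborel {0..} g \<and>
     (LINT x:{0..}|lborel. g x) = 1"

definition me_density_triple :: "real vec \<Rightarrow> real mat \<Rightarrow> real vec \<Rightarrow> bool" where
  "me_density_triple \<alpha> T t \<longleftrightarrow> me_triple \<alpha> T t \<and> prob_density_nonneg (me_fun \<alpha> T t)"

definition is_me_density :: "(real \<Rightarrow> real) \<Rightarrow> bool" where
  "is_me_density g \<longleftrightarrow> (\<exists>\<alpha> T t. me_density_triple \<alpha> T t \<and> (\<forall>x\<ge>0. g x = me_fun \<alpha> T t x))"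

(* index set S = {1..L}^M, multi-indices i :: nat => nat on coordinates 0..M-1 *)
definition idx_set :: "nat \<Rightarrow> nat \<Rightarrow> (nat \<Rightarrow> nat) set" where
  "idx_set M L = PiE {..<M} (\<lambda>_. {1..L})"

definition orthant :: "nat \<Rightarrow> (nat \<Rightarrow> real) set" where
  "orthant M = {x. \<forall>k<M. 0 \<le> x k}"

definition mme_sum :: "nat \<Rightarrow> nat \<Rightarrow> ((nat \<Rightarrow> nat) \<Rightarrow> real) \<Rightarrow> (nat \<Rightarrow> real \<Rightarrow> real)
    \<Rightarrow> (nat \<Rightarrow> real) \<Rightarrow> real" where
  "mme_sum M L p fs x = (\<Sum>i\<in>idx_set M L. p i * (\<Prod>k<M. fs (i k) (x k)))"

definition MMEam :: "nat \<Rightarrow> ((nat \<Rightarrow> real) \<Rightarrow> real) set" where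
  "MMEam M = {f. \<exists>L p fs. L > 0 \<and> (\<forall>j\<in>{1..L}. is_me_density (fs j)) \<and>
      (\<Sum>i\<in>idx_set M L. p i) = 1 \<and>
      (\<forall>x\<in>orthant M. f x = mme_sum M L p fs x \<and> 0 \<le> f x)}"

(* T^{[n,lambda]}: (n+1)x(n+1) blocks, T - lambda I on the diagonal, I on the superdiagonal *)
definition block_mat :: "real mat \<Rightarrow> nat \<Rightarrow> real \<Rightarrow> real mat" where
  "block_mat T n l = (let p = dim_row T in
     mat ((n+1)*p) ((n+1)*p) (\<lambda>(r,c).
       let a = r div p; b = c div p; u = r mod p; v = c mod p in
       if a = b then T $$ (u,v) - (if u = v then l else 0)
       else if b = a + 1 then (if u = v then 1 else 0) else 0))"

definition alpha_blk :: "real vec \<Rightarrow> nat \<Rightarrow> real vec" where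
  "alpha_blk \<alpha> n = vec ((n+1) * dim_vec \<alpha>) (\<lambda>r. if r < dim_vec \<alpha> then \<alpha> $ r else 0)"

definition t_blk :: "real vec \<Rightarrow> nat \<Rightarrow> real vec" where
  "t_blk t n = vec ((n+1) * dim_vec t)
     (\<lambda>r. if n * dim_vec t \<le> r then t $ (r - n * dim_vec t) else 0)"

definition C_ET :: "real vec \<Rightarrow> real mat \<Rightarrow> real vec \<Rightarrow> nat \<Rightarrow> real \<Rightarrow> real" where
  "C_ET \<alpha> T t n l = fact n *
     (\<alpha> \<bullet> ((the (mat_inverse (l \<cdot>\<^sub>m 1\<^sub>m (dim_row T) - T)) ^\<^sub>m (n+1)) *\<^sub>v t))"

definition f_ET :: "real vec \<Rightarrow> real mat \<Rightarrow> real vec \<Rightarrow> nat \<Rightarrow> real \<Rightarrow> real \<Rightarrow> real" where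
  "f_ET \<alpha> T t n l x =
     me_fun ((fact n / C_ET \<alpha> T t n l) \<cdot>\<^sub>v alpha_blk \<alpha> n) (block_mat T n l) (t_blk t n) x"

end

theory Submission
  imports Defs "Jordan_Normal_Form.Spectral_Radius" "HOL-Probability.Distributions"
begin

(* In one variable, T^[n,lambda] is block upper bidiagonal with diagonal blocks T - lambda I and
   identity blocks above them, so the top-right block of its exponential is
   x^n/n! e^(-lambda x) e^(x T), and alpha^[n] and t^[n] see only that block:
   f^ET_{n,lambda,j}(x) = x^n e^(-lambda x) g_j(x) / C^ET_{n,lambda,j}.  Repeated integration by parts,
   with (lambda I - T)^-1 undoing differentiation of alpha e^(x (T - lambda I)) v, gives
   int_0^oo x^n e^(-lambda x) alpha e^(x T) t dx = n! alpha (lambda I - T)^-(n+1) t = C^ET_{n,lambda,j};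
   the boundary terms vanish because e^(x T) decays exponentially when all eigenvalues of T have
   negative real part.  By Fubini the multivariate normaliser is the p-weighted sum of products of
   these one-dimensional integrals, and dividing every factor by its own normaliser exhibits the
   transform as a mixture of products of the ME densities f^ET_{n_k,lambda_k,j}. *)

lemma index_mult_mat_sum:
  assumes "A \<in> carrier_mat n m" "B \<in> carrier_mat m q" "i < n" "j < q"
  shows "(A * B) $$ (i,j) = (\<Sum>l<m. A $$ (i,l) * B $$ (l,j))"
  using assms by (simp add: scalar_prod_def atLeast0LessThan)

lemma index_mult_mat_vec_sum:
  assumes "A \<in> carrier_mat n m" "v \<in> carrier_vec m" "i < n"
  shows "(A *\<^sub>v v) $ i = (\<Sum>l<m. A $$ (i,l) * v $ l)"
  using assms by (simp add: scalar_prod_def atLeast0LessThan)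

lemma scalar_prod_sum_lessThan:
  fixes v w :: "'a::semiring_0 vec"
  assumes "v \<in> carrier_vec m"
  shows "w \<bullet> v = (\<Sum>l<m. w $ l * v $ l)"
  using assms by (simp add: scalar_prod_def atLeast0LessThan)

lemma scalar_prod_mult_mat_vec_sum:
  fixes v w :: "'a::semiring_0 vec"
  assumes "A \<in> carrier_mat p p" "w \<in> carrier_vec p"
  shows "v \<bullet> (A *\<^sub>v w) = (\<Sum>i<p. v $ i * (\<Sum>j<p. A $$ (i,j) * w $ j))"
  using assms by (simp add: scalar_prod_sum_lessThan[of _ p] index_mult_mat_vec_sum)

lemma smult_one_mult_mat_vec:
  fixes v :: "'a::comm_ring_1 vec"
  assumes "v \<in> carrier_vec p"
  shows "(c \<cdot>\<^sub>m 1\<^sub>m p) *\<^sub>v v = c \<cdot>\<^sub>v v"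
proof (rule eq_vecI)
  fix i assume "i < dim_vec (c \<cdot>\<^sub>v v)"
  with assms have i: "i < p" by simp
  have "((c \<cdot>\<^sub>m 1\<^sub>m p) *\<^sub>v v) $ i = (\<Sum>l<p. (if l = i then c * v $ i else 0))"
    using assms i by (simp add: index_mult_mat_vec_sum[of _ p p] cong: if_cong)
  with i assms show "((c \<cdot>\<^sub>m 1\<^sub>m p) *\<^sub>v v) $ i = (c \<cdot>\<^sub>v v) $ i" by simp
qed (use assms in auto)

lemma pow_mat_Suc_left:
  assumes "A \<in> carrier_mat n n"
  shows "A ^\<^sub>m Suc k = A * A ^\<^sub>m k"
proof (induct k)
  case (Suc k)
  have "A ^\<^sub>m Suc (Suc k) = (A * A ^\<^sub>m k) * A" using Suc by simp
  also have "\<dots> = A * (A ^\<^sub>m k * A)" using assms by (intro assoc_mult_mat[of _ n n _ n _ n]) auto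
  finally show ?case by simp
qed (use assms in simp)

lemma pow_smult_mat:
  fixes A :: "'a::comm_ring_1 mat"
  assumes "A \<in> carrier_mat p p"
  shows "(x \<cdot>\<^sub>m A) ^\<^sub>m k = x^k \<cdot>\<^sub>m A ^\<^sub>m k"
proof (induct k)
  case (Suc k)
  have "(x \<cdot>\<^sub>m A) ^\<^sub>m Suc k = x^k \<cdot>\<^sub>m A ^\<^sub>m k * (x \<cdot>\<^sub>m A)" using Suc by simp
  also have "\<dots> = x^Suc k \<cdot>\<^sub>m A ^\<^sub>m Suc k"
    using assms by (intro eq_matI) (auto simp: index_mult_mat_sum[of _ p p _ p] sum_distrib_left mult_ac)
  finally show ?case .
qed (use assms in auto)

lemma sum_binomial_Suc:
  fixes a :: "nat \<Rightarrow> real"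
  shows "(\<Sum>r\<le>Suc k. real (Suc k choose r) * d^(Suc k - r) * a r)
       = (\<Sum>r\<le>k. real (k choose r) * d^(k-r) * a (Suc r)) + d * (\<Sum>r\<le>k. real (k choose r) * d^(k-r) * a r)"
proof -
  have "d * (\<Sum>r\<le>k. real (k choose r) * d^(k-r) * a r) = (\<Sum>r\<le>Suc k. real (k choose r) * d^(Suc k - r) * a r)"
    unfolding sum_distrib_left by (simp add: Suc_diff_le mult_ac)
  also have "\<dots> = d^Suc k * a 0 + (\<Sum>r\<le>k. real (k choose Suc r) * d^(k-r) * a (Suc r))"
    by (subst sum.atMost_Suc_shift) simp
  finally show ?thesis
    by (subst sum.atMost_Suc_shift) (simp add: binomial_Suc_Suc distrib_right sum.distrib)
qed

lemma index_pow_plus_smult_one: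
  fixes A :: "real mat"
  assumes A: "A \<in> carrier_mat p p" and i: "i < p" and j: "j < p"
  shows "((A + d \<cdot>\<^sub>m 1\<^sub>m p) ^\<^sub>m k) $$ (i,j) = (\<Sum>r\<le>k. real (k choose r) * d^(k-r) * (A ^\<^sub>m r) $$ (i,j))"
  using j
proof (induct k arbitrary: j)
  case (Suc k)
  let ?B = "A + d \<cdot>\<^sub>m 1\<^sub>m p"
  have B: "?B \<in> carrier_mat p p" using A by auto
  have "(?B ^\<^sub>m Suc k) $$ (i,j) = (\<Sum>l<p. (?B ^\<^sub>m k) $$ (i,l) * ?B $$ (l,j))"
    using index_mult_mat_sum[OF pow_carrier_mat[OF B] B i Suc.prems, of k] by simp
  also have "\<dots> = (\<Sum>l<p. (?B ^\<^sub>m k) $$ (i,l) * A $$ (l,j))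
      + (\<Sum>l<p. (?B ^\<^sub>m k) $$ (i,l) * (if l = j then d else 0))"
    unfolding sum.distrib[symmetric] using A Suc.prems by (intro sum.cong refl) (auto simp: distrib_left)
  also have "(\<Sum>l<p. (?B ^\<^sub>m k) $$ (i,l) * (if l = j then d else 0)) = d * (?B ^\<^sub>m k) $$ (i,j)"
    using Suc.prems by (simp add: mult.commute if_distrib cong: if_cong)
  also have "(\<Sum>l<p. (?B ^\<^sub>m k) $$ (i,l) * A $$ (l,j))
      = (\<Sum>r\<le>k. real (k choose r) * d^(k-r) * (\<Sum>l<p. (A ^\<^sub>m r) $$ (i,l) * A $$ (l,j)))"
    using Suc.hyps by (simp add: sum_distrib_left sum_distrib_right mult_ac sum.swap[of _ "{..<p}"])
  also have "\<dots> = (\<Sum>r\<le>k. real (k choose r) * d^(k-r) * (A ^\<^sub>m Suc r) $$ (i,j))"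
    using index_mult_mat_sum[OF pow_carrier_mat[OF A] A i Suc.prems] by simp
  finally show ?case using Suc.hyps[OF Suc.prems] sum_binomial_Suc[of k d "\<lambda>r. (A ^\<^sub>m r) $$ (i,j)"] by simp
qed (use A i in auto)

section \<open>The matrix exponential\<close>

definition sum_abs_entries :: "real mat \<Rightarrow> real" where
  "sum_abs_entries A = (\<Sum>i<dim_row A. \<Sum>j<dim_col A. \<bar>A $$ (i,j)\<bar>)"

lemma sum_abs_entries_nonneg: "0 \<le> sum_abs_entries A"
  unfolding sum_abs_entries_def by (intro sum_nonneg) auto

lemma abs_index_pow_mat_le:
  assumes A: "A \<in> carrier_mat p p" and i: "i < p" and j: "j < p"
  shows "\<bar>(A ^\<^sub>m k) $$ (i,j)\<bar> \<le> sum_abs_entries A ^ k"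
  using j
proof (induct k arbitrary: j)
  case (Suc k)
  have col: "(\<Sum>l<p. \<bar>A $$ (l,j)\<bar>) \<le> sum_abs_entries A"
  proof -
    have "(\<Sum>l<p. \<bar>A $$ (l,j)\<bar>) \<le> (\<Sum>l<p. \<Sum>j'<p. \<bar>A $$ (l,j')\<bar>)"
      using Suc.prems by (intro sum_mono member_le_sum) auto
    with A show ?thesis unfolding sum_abs_entries_def by simp
  qed
  have "\<bar>(A ^\<^sub>m Suc k) $$ (i,j)\<bar> = \<bar>\<Sum>l<p. (A ^\<^sub>m k) $$ (i,l) * A $$ (l,j)\<bar>"
    using index_mult_mat_sum[OF pow_carrier_mat[OF A] A i Suc.prems, of k] by simp
  also have "\<dots> \<le> (\<Sum>l<p. sum_abs_entries A ^ k * \<bar>A $$ (l,j)\<bar>)"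
    by (rule order_trans[OF sum_abs], rule sum_mono) (simp add: abs_mult mult_right_mono Suc.hyps)
  also have "\<dots> \<le> sum_abs_entries A ^ k * sum_abs_entries A"
    unfolding sum_distrib_left[symmetric] using col
    by (intro mult_left_mono) (auto simp: sum_abs_entries_nonneg)
  finally show ?case by (simp add: mult.commute)
qed (use A i in auto)

definition mexp_coeff :: "real mat \<Rightarrow> nat \<Rightarrow> nat \<Rightarrow> nat \<Rightarrow> real" where
  "mexp_coeff A i j k = (A ^\<^sub>m k) $$ (i,j) / fact k"

lemma mexp_carrier: "A \<in> carrier_mat p p \<Longrightarrow> mexp (x \<cdot>\<^sub>m A) \<in> carrier_mat p p"
  unfolding mexp_def by auto

lemma index_mexp_smult:
  assumes "A \<in> carrier_mat p p" "i < p" "j < p"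
  shows "mexp (x \<cdot>\<^sub>m A) $$ (i,j) = (\<Sum>k. mexp_coeff A i j k * x^k)"
  using assms unfolding mexp_def mexp_coeff_def by (simp add: pow_smult_mat mult_ac)

lemma exp_real_sums: "(\<lambda>k. y^k / fact k) sums exp (y::real)"
  using exp_converges[of y] by (simp add: divide_inverse mult.commute)

lemma summable_norm_exp_real: "summable (\<lambda>k. norm ((y::real)^k / fact k))"
  using sums_summable[OF exp_real_sums[of "\<bar>y\<bar>"]] by (simp add: power_abs)

lemma summable_norm_mexp_coeff:
  assumes "A \<in> carrier_mat p p" "i < p" "j < p"
  shows "summable (\<lambda>k. norm (mexp_coeff A i j k * x^k))"
proof (rule summable_comparison_test'[OF summable_norm_exp_real[of "sum_abs_entries A * x"]])
  fix k
  have "norm (mexp_coeff A i j k * x^k) \<le> sum_abs_entries A ^ k * \<bar>x\<bar>^k / fact k"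
    unfolding mexp_coeff_def using abs_index_pow_mat_le[OF assms]
    by (simp add: abs_mult power_abs divide_right_mono mult_right_mono)
  then show "norm (norm (mexp_coeff A i j k * x^k)) \<le> norm ((sum_abs_entries A * x)^k / fact k)"
    by (simp add: power_mult_distrib abs_mult power_abs sum_abs_entries_nonneg)
qed

lemma summable_mexp_coeff:
  assumes "A \<in> carrier_mat p p" "i < p" "j < p"
  shows "summable (\<lambda>k. mexp_coeff A i j k * x^k)"
  using summable_norm_cancel[OF summable_norm_mexp_coeff[OF assms]] .

lemma mexp_zero_smult:
  assumes "A \<in> carrier_mat p p"
  shows "mexp (0 \<cdot>\<^sub>m A) = 1\<^sub>m p"
proof (rule eq_matI)
  fix i j assume "i < dim_row (1\<^sub>m p)" "j < dim_col (1\<^sub>m p)"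
  then show "mexp (0 \<cdot>\<^sub>m A) $$ (i,j) = 1\<^sub>m p $$ (i,j)"
    using index_mexp_smult[OF assms, of i j 0] assms powser_zero[of "mexp_coeff A i j"]
    by (simp add: mexp_coeff_def)
qed (use assms mexp_carrier[OF assms] in auto)

lemma has_real_derivative_index_mexp:
  assumes A: "A \<in> carrier_mat p p" and ij: "i < p" "j < p"
  shows "((\<lambda>x. mexp (x \<cdot>\<^sub>m A) $$ (i,j)) has_real_derivative (mexp (x \<cdot>\<^sub>m A) * A) $$ (i,j)) (at x)"
proof -
  have diffs: "diffs (mexp_coeff A i j) k = (\<Sum>l<p. mexp_coeff A i l k * A $$ (l,j))" for k
    using index_mult_mat_sum[OF pow_carrier_mat[OF A] A ij, of k]
    by (simp add: diffs_def mexp_coeff_def sum_divide_distrib)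
  have "((\<lambda>x. \<Sum>k. mexp_coeff A i j k * x^k) has_real_derivative (\<Sum>k. diffs (mexp_coeff A i j) k * x^k)) (at x)"
    by (rule termdiffs_strong_converges_everywhere) (rule summable_mexp_coeff[OF assms])
  moreover have "(\<Sum>k. diffs (mexp_coeff A i j) k * x^k) = (\<Sum>k. \<Sum>l<p. mexp_coeff A i l k * x^k * A $$ (l,j))"
    by (simp add: diffs sum_distrib_left sum_distrib_right mult_ac)
  moreover have "\<dots> = (\<Sum>l<p. \<Sum>k. mexp_coeff A i l k * x^k * A $$ (l,j))"
    using A ij by (intro suminf_sum summable_mult2 summable_mexp_coeff) auto
  moreover have "\<dots> = (mexp (x \<cdot>\<^sub>m A) * A) $$ (i,j)"
    using A ij mexp_carrier[OF A]
    by (simp add: index_mult_mat_sum[of _ p p _ p] index_mexp_smult suminf_mult2[symmetric] summable_mexp_coeff)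
  ultimately show ?thesis using index_mexp_smult[OF assms] by simp
qed

lemma index_mexp_plus_smult_one:
  fixes A :: "real mat"
  assumes A: "A \<in> carrier_mat p p" and ij: "i < p" "j < p"
  shows "mexp (x \<cdot>\<^sub>m (A + d \<cdot>\<^sub>m 1\<^sub>m p)) $$ (i,j) = exp (d*x) * mexp (x \<cdot>\<^sub>m A) $$ (i,j)"
proof -
  let ?B = "A + d \<cdot>\<^sub>m 1\<^sub>m p"
  let ?u = "\<lambda>r. mexp_coeff A i j r * x^r" and ?v = "\<lambda>m. (d*x)^m / fact m"
  have "exp (d*x) * mexp (x \<cdot>\<^sub>m A) $$ (i,j) = (\<Sum>r. ?u r) * (\<Sum>m. ?v m)"
    using index_mexp_smult[OF A ij] sums_unique[OF exp_real_sums[of "d*x"]] by simp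
  also have "\<dots> = (\<Sum>k. \<Sum>r\<le>k. ?u r * ?v (k - r))"
    by (rule Cauchy_product[OF summable_norm_mexp_coeff[OF A ij] summable_norm_exp_real])
  also have "\<dots> = (\<Sum>k. mexp_coeff ?B i j k * x^k)"
  proof (intro suminf_cong)
    fix k
    have "?u r * ?v (k - r) = real (k choose r) * d^(k-r) * (A ^\<^sub>m r) $$ (i,j) / fact k * x^k"
      if "r \<le> k" for r
      unfolding mexp_coeff_def binomial_fact[OF that] power_add[symmetric] le_add_diff_inverse[OF that]
      by (simp add: power_mult_distrib power_add[symmetric] that field_simps)
    then show "(\<Sum>r\<le>k. ?u r * ?v (k - r)) = mexp_coeff ?B i j k * x^k"
      unfolding mexp_coeff_def index_pow_plus_smult_one[OF A ij] sum_divide_distrib sum_distrib_right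
      by (intro sum.cong) auto
  qed
  also have "\<dots> = mexp (x \<cdot>\<^sub>m ?B) $$ (i,j)"
    using A by (simp add: index_mexp_smult[OF _ ij])
  finally show ?thesis ..
qed

lemma eigenvalue_affine_preimage:
  fixes T :: "real mat"
  assumes T: "T \<in> carrier_mat p p" and b: "b \<noteq> 0"
    and ev: "eigenvalue (map_mat complex_of_real (a \<cdot>\<^sub>m 1\<^sub>m p + b \<cdot>\<^sub>m T)) z"
  shows "eigenvalue (map_mat complex_of_real T) ((z - a) / b)"
proof -
  let ?R = "map_mat complex_of_real (a \<cdot>\<^sub>m 1\<^sub>m p + b \<cdot>\<^sub>m T)" and ?T = "map_mat complex_of_real T"
  have R: "?R \<in> carrier_mat p p" and Tc: "?T \<in> carrier_mat p p" using T by auto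
  from ev obtain v where v: "v \<in> carrier_vec p" "v \<noteq> 0\<^sub>v p" "?R *\<^sub>v v = z \<cdot>\<^sub>v v"
    unfolding eigenvalue_def eigenvector_def using R by auto
  have "?T *\<^sub>v v = ((z - a) / b) \<cdot>\<^sub>v v"
  proof (rule eq_vecI)
    fix i assume "i < dim_vec (((z - a) / b) \<cdot>\<^sub>v v)"
    with v have i: "i < p" by simp
    have "(?R *\<^sub>v v) $ i = (\<Sum>l<p. (if i = l then complex_of_real a * v $ l else 0) + complex_of_real b * (?T $$ (i,l) * v $ l))"
      unfolding index_mult_mat_vec_sum[OF R v(1) i]
      by (intro sum.cong refl) (use T i in \<open>auto simp: distrib_right\<close>)
    also have "\<dots> = complex_of_real a * v $ i + complex_of_real b * (?T *\<^sub>v v) $ i"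
      unfolding sum.distrib index_mult_mat_vec_sum[OF Tc v(1) i] using i by (simp add: sum_distrib_left)
    finally have "complex_of_real a * v $ i + complex_of_real b * (?T *\<^sub>v v) $ i = z * v $ i"
      using v i by simp
    with b i v show "(?T *\<^sub>v v) $ i = (((z - a) / b) \<cdot>\<^sub>v v) $ i" by (simp add: field_simps)
  qed (use v Tc in auto)
  then show ?thesis unfolding eigenvalue_def eigenvector_def using v Tc by auto
qed

lemma cmod_one_plus_divide_less_one:
  fixes \<nu> :: complex and s :: real
  assumes r: "Re \<nu> < 0" and s: "s > (cmod \<nu>)^2 / (-2 * Re \<nu>)"
  shows "cmod (1 + \<nu> / s) < 1"
proof -
  have r2: "-2 * Re \<nu> > 0" using r by simp
  have "(cmod \<nu>)^2 / (-2 * Re \<nu>) * (-2 * Re \<nu>) < s * (-2 * Re \<nu>)"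
    by (rule mult_strict_right_mono[OF s r2])
  with r2 have "(cmod \<nu>)^2 < s * (-2 * Re \<nu>)" by simp
  then have key: "2 * Re \<nu> * s + (Re \<nu>)^2 + (Im \<nu>)^2 < 0" by (simp add: cmod_power2 algebra_simps)
  have "0 \<le> (cmod \<nu>)^2 / (-2 * Re \<nu>)" using r2 by (intro divide_nonneg_pos) auto
  with s have "s > 0" by linarith
  have "(cmod (1 + \<nu> / s))^2 = (1 + Re \<nu> / s)^2 + (Im \<nu> / s)^2"
    by (simp add: cmod_power2)
  also have "\<dots> = 1 + (2 * Re \<nu> * s + (Re \<nu>)^2 + (Im \<nu>)^2) / s^2"
    using \<open>s > 0\<close> by (simp add: field_simps power2_eq_square)
  also have "\<dots> < 1" using key \<open>s > 0\<close> by (simp add: divide_neg_pos)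
  finally show ?thesis by (simp add: power_less_one_iff abs_square_less_1)
qed

lemma abs_index_mexp_le_of_bounded_powers:
  fixes R :: "real mat"
  assumes R: "R \<in> carrier_mat p p" and ij: "i < p" "j < p"
    and c: "\<And>k. \<bar>(R ^\<^sub>m k) $$ (i,j)\<bar> \<le> c" and y: "y \<ge> 0"
  shows "\<bar>mexp (y \<cdot>\<^sub>m R) $$ (i,j)\<bar> \<le> c * exp y"
proof -
  have "\<bar>mexp (y \<cdot>\<^sub>m R) $$ (i,j)\<bar> \<le> (\<Sum>k. norm (mexp_coeff R i j k * y^k))"
    unfolding index_mexp_smult[OF R ij] real_norm_def[symmetric]
    by (rule summable_norm[OF summable_norm_mexp_coeff[OF R ij]])
  also have "\<dots> \<le> (\<Sum>k. c * (y^k / fact k))"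
  proof (rule suminf_le)
    show "norm (mexp_coeff R i j k * y^k) \<le> c * (y^k / fact k)" for k
      unfolding mexp_coeff_def using c[of k] y by (simp add: abs_mult divide_right_mono mult_right_mono)
  qed (rule summable_norm_mexp_coeff[OF R ij], rule summable_mult[OF sums_summable[OF exp_real_sums]])
  also have "\<dots> = c * exp y" using sums_unique[OF sums_mult[OF exp_real_sums[of y], of c]] by simp
  finally show ?thesis .
qed

text \<open>Choose \<open>\<epsilon> > 0\<close> with \<open>Re \<mu> + \<epsilon> < 0\<close> for every eigenvalue \<open>\<mu>\<close> of \<open>T\<close>, and \<open>s\<close> so large that
  the eigenvalues \<open>1 + (\<mu> + \<epsilon>) / s\<close> of \<open>((s + \<epsilon>) / s) I + T / s\<close> lie in the open unit disc.\<close>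

lemma spectral_radius_shifted_scaled_less_one:
  fixes T :: "real mat"
  assumes T: "T \<in> carrier_mat p p" and ev: "\<forall>z. eigenvalue (map_mat complex_of_real T) z \<longrightarrow> Re z < 0"
    and p: "p > 0"
  obtains \<epsilon> s where "\<epsilon> > 0" "s > 0"
    "spectral_radius (map_mat complex_of_real (((s+\<epsilon>)/s) \<cdot>\<^sub>m 1\<^sub>m p + (1/s) \<cdot>\<^sub>m T)) < 1"
proof -
  let ?Tc = "map_mat complex_of_real T"
  have Tc: "?Tc \<in> carrier_mat p p" using T by auto
  define spec where "spec = spectrum ?Tc"
  have fin: "finite spec" unfolding spec_def by (rule card_finite_spectrum(1)[OF Tc])
  have neg: "Re \<mu> < 0" if "\<mu> \<in> spec" for \<mu> using ev that unfolding spec_def spectrum_def by auto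
  define \<epsilon> where "\<epsilon> = Min (insert 1 ((\<lambda>\<mu>. - Re \<mu> / 2) ` spec))"
  have \<epsilon>: "\<epsilon> > 0" unfolding \<epsilon>_def using fin neg by (subst Min_gr_iff) auto
  have \<epsilon>_le: "Re \<mu> + \<epsilon> < 0" if "\<mu> \<in> spec" for \<mu>
    using neg[OF that] Min_le[OF _ insertI2[OF imageI[OF that]], of 1 "\<lambda>\<mu>. - Re \<mu> / 2"] fin
    unfolding \<epsilon>_def by auto
  define N where "N \<nu> = (cmod \<nu>)^2 / (-2 * Re \<nu>)" for \<nu> :: complex
  define s where "s = 1 + (\<Sum>\<mu>\<in>spec. N (\<mu> + \<epsilon>))"
  have N_nonneg: "N (\<mu> + \<epsilon>) \<ge> 0" if "\<mu> \<in> spec" for \<mu>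
    unfolding N_def using \<epsilon>_le[OF that] by (intro divide_nonneg_pos) auto
  have s: "s > 0" unfolding s_def using N_nonneg by (simp add: sum_nonneg add_pos_nonneg)
  have s_gt: "s > N (\<mu> + \<epsilon>)" if "\<mu> \<in> spec" for \<mu>
    using member_le_sum[of \<mu> spec "\<lambda>\<mu>. N (\<mu> + \<epsilon>)"] that N_nonneg fin unfolding s_def by auto
  let ?Rc = "map_mat complex_of_real (((s+\<epsilon>)/s) \<cdot>\<^sub>m 1\<^sub>m p + (1/s) \<cdot>\<^sub>m T)"
  have Rc: "?Rc \<in> carrier_mat p p" using T by auto
  have spectrum_R: "cmod z < 1" if "z \<in> spectrum ?Rc" for z
  proof -
    define \<mu> where "\<mu> = (z - ((s+\<epsilon>)/s)) / (1/s)"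
    have "\<mu> \<in> spec"
      using eigenvalue_affine_preimage[OF T _ that[unfolded spectrum_def, simplified]] s
      unfolding spec_def spectrum_def \<mu>_def by simp
    then have "Re (\<mu> + \<epsilon>) < 0" "s > N (\<mu> + \<epsilon>)" using \<epsilon>_le s_gt by auto
    moreover have "z = 1 + (\<mu> + \<epsilon>) / s"
      unfolding \<mu>_def using s by (simp add: field_simps)
    ultimately show ?thesis unfolding N_def by (simp add: cmod_one_plus_divide_less_one)
  qed
  have "spectrum ?Rc \<noteq> {}" by (rule spectrum_non_empty[OF Rc]) (use p in auto)
  moreover have "finite (norm ` spectrum ?Rc)" using card_finite_spectrum(1)[OF Rc] by auto
  ultimately have "spectral_radius ?Rc < 1"
    unfolding spectral_radius_def using spectrum_R by (subst Max_less_iff) auto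
  with \<epsilon> s that show ?thesis by blast
qed

text \<open>With \<open>R = I + (T + \<epsilon> I) / s\<close> of spectral radius below \<open>1\<close>, the powers of \<open>R\<close> are bounded,
  so \<open>e\<^sup>x\<^sup>T = e\<^sup>-\<^sup>(\<^sup>s\<^sup>+\<^sup>\<epsilon>\<^sup>)\<^sup>x e\<^sup>x\<^sup>s\<^sup>R\<close> decays like \<open>e\<^sup>-\<^sup>\<epsilon>\<^sup>x\<close>.\<close>

lemma mexp_exponential_decay:
  fixes T :: "real mat"
  assumes T: "T \<in> carrier_mat p p" and ev: "\<forall>z. eigenvalue (map_mat complex_of_real T) z \<longrightarrow> Re z < 0"
  obtains c \<epsilon> where "\<epsilon> > 0" "\<And>x i j. x \<ge> 0 \<Longrightarrow> i < p \<Longrightarrow> j < p \<Longrightarrow> \<bar>mexp (x \<cdot>\<^sub>m T) $$ (i,j)\<bar> \<le> c * exp (-\<epsilon>*x)"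
proof (cases "p = 0")
  case True
  then show ?thesis using that[of 1 0] by auto
next
  case False
  then obtain \<epsilon> s where \<epsilon>: "\<epsilon> > 0" and s: "s > 0"
    and sr: "spectral_radius (map_mat complex_of_real (((s+\<epsilon>)/s) \<cdot>\<^sub>m 1\<^sub>m p + (1/s) \<cdot>\<^sub>m T)) < 1"
    using spectral_radius_shifted_scaled_less_one[OF T ev] by blast
  define R where "R = ((s+\<epsilon>)/s) \<cdot>\<^sub>m 1\<^sub>m p + (1/s) \<cdot>\<^sub>m T"
  have R: "R \<in> carrier_mat p p" unfolding R_def using T by auto
  from spectral_radius_jnf_norm_bound_less_1_upper_triangular[of "map_mat complex_of_real R" p] R sr
  obtain c where c: "\<And>k. norm_bound (map_mat complex_of_real R ^\<^sub>m k) c" unfolding R_def by auto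
  have R_pow: "\<bar>(R ^\<^sub>m k) $$ (i,j)\<bar> \<le> c" if "i < p" "j < p" for i j k
    using c[of k] that R unfolding of_real_hom.mat_hom_pow[OF R, symmetric] norm_bound_def by auto
  have T_eq: "T = s \<cdot>\<^sub>m R + (-(s+\<epsilon>)) \<cdot>\<^sub>m 1\<^sub>m p"
    unfolding R_def using T s by (intro eq_matI) (auto simp: field_simps)
  have "\<bar>mexp (x \<cdot>\<^sub>m T) $$ (i,j)\<bar> \<le> c * exp (-\<epsilon>*x)" if x: "x \<ge> 0" and ij: "i < p" "j < p" for x i j
  proof -
    have "x \<cdot>\<^sub>m (s \<cdot>\<^sub>m R) = (x * s) \<cdot>\<^sub>m R" by (intro eq_matI) auto
    then have "\<bar>mexp (x \<cdot>\<^sub>m T) $$ (i,j)\<bar> = exp (-(s+\<epsilon>)*x) * \<bar>mexp ((x * s) \<cdot>\<^sub>m R) $$ (i,j)\<bar>"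
      using index_mexp_plus_smult_one[of "s \<cdot>\<^sub>m R" p i j x "-(s+\<epsilon>)"] R ij
      unfolding T_eq[symmetric] by (simp add: abs_mult)
    also have "\<dots> \<le> exp (-(s+\<epsilon>)*x) * (c * exp (x * s))"
      using x s by (intro mult_left_mono abs_index_mexp_le_of_bounded_powers[OF R ij] R_pow ij) auto
    also have "\<dots> = c * exp (-\<epsilon>*x)"
      by (simp add: exp_add[symmetric] algebra_simps)
    finally show ?thesis .
  qed
  with \<epsilon> that show ?thesis by blast
qed

section \<open>The block matrix \<open>T\<^sup>[\<^sup>n\<^sup>,\<^sup>\<lambda>\<^sup>]\<close>\<close>

text \<open>Index \<open>a * p + w\<close> addresses position \<open>w\<close> within block \<open>a\<close>.\<close>

lemma sum_lessThan_mult_blocks: "(\<Sum>c<q*p. F c) = (\<Sum>a<q. \<Sum>w<p. F (a*p+w :: nat))"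
proof (induct q)
  case (Suc q)
  have "(\<Sum>c<Suc q*p. F c) = (\<Sum>c<q*p. F c) + (\<Sum>c\<in>{q*p..<q*p+p}. F c)"
    by (simp add: atLeast0LessThan[symmetric] sum.atLeastLessThan_concat add.commute)
  also have "(\<Sum>c\<in>{q*p..<q*p+p}. F c) = (\<Sum>w<p. F (q*p+w))"
    using sum.shift_bounds_nat_ivl[of F 0 "q*p" p] by (simp add: atLeast0LessThan add.commute)
  finally show ?case using Suc by simp
qed simp

lemma block_index_less:
  assumes "a \<le> n" "w < (p::nat)"
  shows "a*p+w < Suc n * p"
proof -
  have "a*p+w < Suc a * p" using assms by simp
  also have "\<dots> \<le> Suc n * p" using assms by (intro mult_right_mono) auto
  finally show ?thesis .
qed

lemma block_mat_carrier: "T \<in> carrier_mat p p \<Longrightarrow> block_mat T n l \<in> carrier_mat (Suc n * p) (Suc n * p)"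
  unfolding block_mat_def by (auto simp: Let_def)

lemma index_block_mat:
  assumes T: "T \<in> carrier_mat p p" and "a \<le> n" "b \<le> n" "w < p" "v < p"
  shows "block_mat T n l $$ (a*p+w, b*p+v) =
    (if a = b then (T + (-l) \<cdot>\<^sub>m 1\<^sub>m p) $$ (w,v) else if b = a+1 then (if w = v then 1 else 0) else 0)"
proof -
  have d: "dim_row T = p" using T by auto
  have h: "(a*p+w) div p = a" "(a*p+w) mod p = w" "(b*p+v) div p = b" "(b*p+v) mod p = v"
    using assms by auto
  have "a*p+w < (n+1)*p" "b*p+v < (n+1)*p"
    using block_index_less assms by simp_all
  then have "block_mat T n l $$ (a*p+w, b*p+v) = (if a = b then T $$ (w,v) - (if w = v then l else 0)
      else if b = a+1 then (if w = v then 1 else 0) else 0)"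
    unfolding block_mat_def Let_def d by (subst index_mat(1)) (simp_all only: prod.case h)
  with T assms show ?thesis by simp
qed

lemma index_mult_block_mat:
  assumes T: "T \<in> carrier_mat p p" and X: "X \<in> carrier_mat m (Suc n * p)"
    and u: "u < m" and b: "b \<le> n" and v: "v < p"
  shows "(X * block_mat T n l) $$ (u, b*p+v)
       = (\<Sum>w<p. X $$ (u,b*p+w) * (T + (-l) \<cdot>\<^sub>m 1\<^sub>m p) $$ (w,v))
         + (if 1 \<le> b then X $$ (u,(b-1)*p+v) else 0)"
proof -
  let ?B = "block_mat T n l" and ?S = "T + (-l) \<cdot>\<^sub>m 1\<^sub>m p"
  have "(X * ?B) $$ (u, b*p+v) = (\<Sum>c<Suc n * p. X $$ (u,c) * ?B $$ (c, b*p+v))"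
    by (rule index_mult_mat_sum[OF X block_mat_carrier[OF T] u block_index_less[OF b v]])
  also have "\<dots> = (\<Sum>a<Suc n. \<Sum>w<p. X $$ (u,a*p+w) * ?B $$ (a*p+w, b*p+v))"
    by (rule sum_lessThan_mult_blocks)
  also have "\<dots> = (\<Sum>a<Suc n. (if a = b then (\<Sum>w<p. X $$ (u,b*p+w) * ?S $$ (w,v)) else 0)
                 + (if a + 1 = b then X $$ (u,a*p+v) else 0))"
  proof (intro sum.cong refl)
    fix a assume "a \<in> {..<Suc n}"
    then have a: "a \<le> n" by simp
    have "(\<Sum>w<p. X $$ (u,a*p+w) * ?B $$ (a*p+w, b*p+v))
      = (\<Sum>w<p. (if a = b then X $$ (u,b*p+w) * ?S $$ (w,v) else 0)
             + (if a + 1 = b then (if w = v then X $$ (u,a*p+v) else 0) else 0))"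
      by (intro sum.cong refl) (use index_block_mat[OF T a b _ v] in auto)
    also have "\<dots> = (if a = b then (\<Sum>w<p. X $$ (u,b*p+w) * ?S $$ (w,v)) else 0)
                 + (if a + 1 = b then X $$ (u,a*p+v) else 0)"
      using v by (simp add: sum.distrib)
    finally show "(\<Sum>w<p. X $$ (u,a*p+w) * ?B $$ (a*p+w, b*p+v)) = \<dots>" .
  qed
  also have "\<dots> = (\<Sum>w<p. X $$ (u,b*p+w) * ?S $$ (w,v)) + (if 1 \<le> b then X $$ (u,(b-1)*p+v) else 0)"
  proof -
    have e: "(\<Sum>a<Suc n. (if a + 1 = b then X $$ (u,a*p+v) else 0))
        = (\<Sum>a<Suc n. (if a = b - 1 then (if 1 \<le> b then X $$ (u,a*p+v) else 0) else 0))"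
      by (intro sum.cong refl) auto
    show ?thesis unfolding sum.distrib e using b by auto
  qed
  finally show ?thesis .
qed

lemma binomial_pascal_shift:
  fixes X :: "nat \<Rightarrow> real"
  shows "real (k choose b) * X (Suc (k - b)) + (if 1 \<le> b then real (k choose (b-1)) * X (k - (b-1)) else 0)
       = real (Suc k choose b) * X (Suc k - b)"
proof (cases "b \<le> k")
  case True
  show ?thesis
  proof (cases b)
    case (Suc b')
    with True have "Suc (k - Suc b') = k - b'" by arith
    with True Suc show ?thesis by (simp add: Suc_diff_le distrib_right)
  qed simp
next
  case False
  then show ?thesis by (cases "b = Suc k") (auto simp: binomial_eq_0)
qed

lemma index_pow_block_mat:
  fixes T :: "real mat"
  assumes T: "T \<in> carrier_mat p p" and u: "u < p" and b: "b \<le> n" and v: "v < p"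
  shows "(block_mat T n l ^\<^sub>m k) $$ (u, b*p+v) = real (k choose b) * ((T + (-l) \<cdot>\<^sub>m 1\<^sub>m p) ^\<^sub>m (k - b)) $$ (u,v)"
  using b v
proof (induct k arbitrary: b v)
  case 0
  have "u < Suc n * p" "b*p+v < Suc n * p" using block_index_less[of 0 n u p] block_index_less[of b n v p] 0 u by auto
  with 0 T u block_mat_carrier[OF T, of n l] show ?case by (cases b) auto
next
  case (Suc k)
  let ?B = "block_mat T n l" and ?S = "T + (-l) \<cdot>\<^sub>m 1\<^sub>m p"
  have S: "?S \<in> carrier_mat p p" using T by auto
  have u': "u < Suc n * p" using block_index_less[of 0 n u p] u by simp
  have "(?B ^\<^sub>m Suc k) $$ (u, b*p+v) = (\<Sum>w<p. (?B ^\<^sub>m k) $$ (u,b*p+w) * ?S $$ (w,v))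
       + (if 1 \<le> b then (?B ^\<^sub>m k) $$ (u,(b-1)*p+v) else 0)"
    using index_mult_block_mat[OF T pow_carrier_mat[OF block_mat_carrier[OF T]] u' Suc.prems] by simp
  also have "(\<Sum>w<p. (?B ^\<^sub>m k) $$ (u,b*p+w) * ?S $$ (w,v)) = real (k choose b) * (?S ^\<^sub>m Suc (k - b)) $$ (u,v)"
    using Suc.hyps[OF Suc.prems(1)] index_mult_mat_sum[OF pow_carrier_mat[OF S] S u Suc.prems(2), of "k-b"]
    by (simp add: sum_distrib_left mult_ac)
  also have "(if 1 \<le> b then (?B ^\<^sub>m k) $$ (u,(b-1)*p+v) else 0)
     = (if 1 \<le> b then real (k choose (b-1)) * (?S ^\<^sub>m (k - (b-1))) $$ (u,v) else 0)"
    using Suc.hyps[of "b-1" v] Suc.prems by auto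
  finally show ?case using binomial_pascal_shift[of k b "\<lambda>m. (?S ^\<^sub>m m) $$ (u,v)"] by simp
qed

lemma index_mexp_block_mat:
  fixes T :: "real mat"
  assumes T: "T \<in> carrier_mat p p" and uv: "u < p" "v < p"
  shows "mexp (x \<cdot>\<^sub>m block_mat T n l) $$ (u, n*p+v) = x^n / fact n * exp (-l*x) * mexp (x \<cdot>\<^sub>m T) $$ (u,v)"
proof -
  let ?B = "block_mat T n l" and ?S = "T + (-l) \<cdot>\<^sub>m 1\<^sub>m p"
  have S: "?S \<in> carrier_mat p p" using T by auto
  define f where "f k = mexp_coeff ?B u (n*p+v) k * x^k" for k
  have f: "f k = real (k choose n) * (?S ^\<^sub>m (k-n)) $$ (u,v) / fact k * x^k" for k
    unfolding f_def mexp_coeff_def using index_pow_block_mat[OF T uv(1) le_refl uv(2)] by simp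
  have "f (m+n) = x^n / fact n * (mexp_coeff ?S u v m * x^m)" for m
  proof -
    have "real (m + n choose n) = fact (m+n) / (fact n * fact m)"
      using binomial_fact[of n "m+n"] by simp
    then show ?thesis unfolding f mexp_coeff_def by (simp add: power_add field_simps)
  qed
  then have "(\<lambda>m. f (m+n)) = (\<lambda>m. x^n / fact n * (mexp_coeff ?S u v m * x^m))" by simp
  moreover have "(\<lambda>m. x^n / fact n * (mexp_coeff ?S u v m * x^m)) sums (x^n / fact n * mexp (x \<cdot>\<^sub>m ?S) $$ (u,v))"
    unfolding index_mexp_smult[OF S uv] by (intro sums_mult summable_sums summable_mexp_coeff[OF S uv])
  moreover have "(\<Sum>i<n. f i) = 0" by (intro sum.neutral) (auto simp: f binomial_eq_0)
  ultimately have "f sums (x^n / fact n * mexp (x \<cdot>\<^sub>m ?S) $$ (u,v))"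
    using sums_iff_shift[of f n] by simp
  moreover have "mexp (x \<cdot>\<^sub>m ?B) $$ (u, n*p+v) = (\<Sum>k. f k)"
    unfolding f_def using block_mat_carrier[OF T] block_index_less[of 0 n u p] block_index_less[of n n v p] uv
    by (simp add: index_mexp_smult[of _ "Suc n * p"])
  ultimately show ?thesis using index_mexp_plus_smult_one[OF T uv, of x "-l"] by (simp add: sums_iff)
qed

lemma index_block_mat_mult_vec:
  fixes v :: "complex vec"
  assumes T: "T \<in> carrier_mat p p" and v: "v \<in> carrier_vec (Suc n * p)" and b: "b \<le> n" and u: "u < p"
  shows "(map_mat complex_of_real (block_mat T n l) *\<^sub>v v) $ (b*p+u)
       = (\<Sum>w<p. complex_of_real ((T + (-l) \<cdot>\<^sub>m 1\<^sub>m p) $$ (u,w)) * v $ (b*p+w))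
         + (if b < n then v $ (Suc b * p + u) else 0)"
proof -
  let ?B = "block_mat T n l" and ?S = "T + (-l) \<cdot>\<^sub>m 1\<^sub>m p"
  have Bc: "map_mat complex_of_real ?B \<in> carrier_mat (Suc n * p) (Suc n * p)"
    using block_mat_carrier[OF T] by auto
  have "(map_mat complex_of_real ?B *\<^sub>v v) $ (b*p+u)
      = (\<Sum>c<Suc n * p. map_mat complex_of_real ?B $$ (b*p+u, c) * v $ c)"
    by (rule index_mult_mat_vec_sum[OF Bc v block_index_less[OF b u]])
  also have "\<dots> = (\<Sum>a<Suc n. \<Sum>w<p. map_mat complex_of_real ?B $$ (b*p+u, a*p+w) * v $ (a*p+w))"
    by (rule sum_lessThan_mult_blocks)
  also have "\<dots> = (\<Sum>a<Suc n. \<Sum>w<p. complex_of_real (?B $$ (b*p+u, a*p+w)) * v $ (a*p+w))"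
    using Bc block_index_less[OF b u] block_index_less[of _ n _ p] by (intro sum.cong refl) auto
  also have "\<dots> = (\<Sum>a<Suc n. (if a = b then (\<Sum>w<p. complex_of_real (?S $$ (u,w)) * v $ (b*p+w)) else 0)
                    + (if a = b+1 then v $ (a*p+u) else 0))"
  proof (rule sum.cong[OF refl])
    fix a assume "a \<in> {..<Suc n}"
    then have a: "a \<le> n" by simp
    have "(\<Sum>w<p. complex_of_real (?B $$ (b*p+u, a*p+w)) * v $ (a*p+w))
      = (\<Sum>w<p. (if a = b then complex_of_real (?S $$ (u,w)) * v $ (b*p+w) else 0)
         + (if a = b+1 then (if w = u then v $ (a*p+u) else 0) else 0))"
      by (rule sum.cong[OF refl]) (use index_block_mat[OF T b a u] in auto)
    also have "\<dots> = (if a = b then (\<Sum>w<p. complex_of_real (?S $$ (u,w)) * v $ (b*p+w)) else 0)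
                    + (if a = b+1 then v $ (a*p+u) else 0)"
      using u by (simp add: sum.distrib)
    finally show "(\<Sum>w<p. complex_of_real (?B $$ (b*p+u, a*p+w)) * v $ (a*p+w)) = \<dots>" .
  qed
  also have "\<dots> = (\<Sum>w<p. complex_of_real (?S $$ (u,w)) * v $ (b*p+w)) + (if b < n then v $ (Suc b * p + u) else 0)"
    using b by (simp add: sum.distrib)
  finally show ?thesis .
qed

lemma obtain_last_nonzero_block:
  fixes v :: "'a::zero vec"
  assumes v: "v \<in> carrier_vec (Suc n * p)" "v \<noteq> 0\<^sub>v (Suc n * p)"
  obtains b where "b \<le> n" "vec p (\<lambda>u. v $ (b*p+u)) \<noteq> 0\<^sub>v p"
    "\<And>u. b < n \<Longrightarrow> u < p \<Longrightarrow> v $ (Suc b * p + u) = 0"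
proof -
  define K where "K = {a. a \<le> n \<and> (\<exists>u<p. v $ (a*p+u) \<noteq> 0)}"
  obtain c where c: "c < Suc n * p" "v $ c \<noteq> 0"
  proof (rule ccontr)
    assume "\<not> thesis"
    with that have "v = 0\<^sub>v (Suc n * p)" using v(1) by (intro eq_vecI) auto
    with v(2) show False ..
  qed
  then have "p > 0" by (cases p) auto
  with c have "c div p < Suc n" by (simp add: div_less_iff_less_mult)
  moreover have "c div p * p + c mod p = c" by simp
  ultimately have "c div p \<in> K" unfolding K_def using c \<open>p > 0\<close> by (auto intro!: exI[of _ "c mod p"])
  moreover have "finite K" unfolding K_def by (rule finite_subset[of _ "{..n}"]) auto
  ultimately have b: "Max K \<in> K" by (intro Max_in) auto
  have b_max: "a \<le> Max K" if "a \<in> K" for a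
    using \<open>finite K\<close> that by simp
  have "vec p (\<lambda>u. v $ (Max K * p + u)) \<noteq> 0\<^sub>v p"
  proof
    assume "vec p (\<lambda>u. v $ (Max K * p + u)) = 0\<^sub>v p"
    moreover from b obtain u where "u < p" "v $ (Max K * p + u) \<noteq> 0" unfolding K_def by auto
    ultimately show False by (metis index_vec index_zero_vec(1))
  qed
  moreover have "v $ (Suc (Max K) * p + u) = 0" if "Max K < n" "u < p" for u
  proof (rule ccontr)
    assume "v $ (Suc (Max K) * p + u) \<noteq> 0"
    with that have "Suc (Max K) \<in> K" unfolding K_def by auto
    with b_max show False by fastforce
  qed
  ultimately show ?thesis using b that unfolding K_def by blast
qed

text \<open>The last nonzero block of an eigenvector of \<open>T\<^sup>[\<^sup>n\<^sup>,\<^sup>\<lambda>\<^sup>]\<close> for \<open>z\<close> is an eigenvector of \<open>T\<close>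
  for \<open>z + \<lambda>\<close>.\<close>

lemma eigenvalue_block_mat_Re_neg:
  fixes T :: "real mat"
  assumes T: "T \<in> carrier_mat p p" and ev: "\<forall>z. eigenvalue (map_mat complex_of_real T) z \<longrightarrow> Re z < 0"
    and l: "0 \<le> l"
  shows "\<forall>z. eigenvalue (map_mat complex_of_real (block_mat T n l)) z \<longrightarrow> Re z < 0"
proof (intro allI impI)
  fix z assume "eigenvalue (map_mat complex_of_real (block_mat T n l)) z"
  let ?S = "T + (-l) \<cdot>\<^sub>m 1\<^sub>m p" and ?Tc = "map_mat complex_of_real T"
  have Tc: "?Tc \<in> carrier_mat p p" using T by auto
  have "map_mat complex_of_real (block_mat T n l) \<in> carrier_mat (Suc n * p) (Suc n * p)"
    using block_mat_carrier[OF T] by auto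
  with \<open>eigenvalue _ z\<close> obtain v where v: "v \<in> carrier_vec (Suc n * p)" "v \<noteq> 0\<^sub>v (Suc n * p)"
    and Bv: "map_mat complex_of_real (block_mat T n l) *\<^sub>v v = z \<cdot>\<^sub>v v"
    unfolding eigenvalue_def eigenvector_def by auto
  obtain b where bn: "b \<le> n" and w_nz: "vec p (\<lambda>u. v $ (b*p+u)) \<noteq> 0\<^sub>v p"
    and next_block: "\<And>u. b < n \<Longrightarrow> u < p \<Longrightarrow> v $ (Suc b * p + u) = 0"
    using obtain_last_nonzero_block[OF v] by blast
  define w where "w = vec p (\<lambda>u. v $ (b*p+u))"
  have w: "w \<in> carrier_vec p" unfolding w_def by simp
  have "w \<noteq> 0\<^sub>v p" using w_nz unfolding w_def .
  moreover have "?Tc *\<^sub>v w = (z + complex_of_real l) \<cdot>\<^sub>v w"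
  proof (rule eq_vecI)
    fix u assume "u < dim_vec ((z + complex_of_real l) \<cdot>\<^sub>v w)"
    then have u: "u < p" using w by simp
    have "(if b < n then v $ (Suc b * p + u) else 0) = 0" using next_block[OF _ u] by simp
    then have "z * w $ u = (\<Sum>w'<p. complex_of_real (?S $$ (u,w')) * w $ w')"
      using arg_cong[OF Bv, of "\<lambda>x. x $ (b*p+u)"] index_block_mat_mult_vec[OF T v(1) bn u]
        block_index_less[OF bn u] v(1) u
      by (simp add: w_def)
    also have "\<dots> = (\<Sum>w'<p. ?Tc $$ (u,w') * w $ w' - (if w' = u then complex_of_real l * w $ u else 0))"
      by (rule sum.cong[OF refl]) (use T u in \<open>auto simp: left_diff_distrib\<close>)
    also have "\<dots> = (?Tc *\<^sub>v w) $ u - complex_of_real l * w $ u"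
      using u by (simp add: sum_subtractf index_mult_mat_vec_sum[OF Tc w u])
    finally show "(?Tc *\<^sub>v w) $ u = ((z + complex_of_real l) \<cdot>\<^sub>v w) $ u"
      using u w by (simp add: algebra_simps)
  qed (use Tc w in auto)
  ultimately have "eigenvalue ?Tc (z + complex_of_real l)"
    unfolding eigenvalue_def eigenvector_def using w Tc by auto
  with ev l show "Re z < 0" by fastforce
qed

section \<open>Moments of matrix-exponential functions\<close>

lemma mat_inverse_smult_one_minus:
  fixes T :: "real mat"
  assumes T: "T \<in> carrier_mat p p" and ev: "\<forall>z. eigenvalue (map_mat complex_of_real T) z \<longrightarrow> Re z < 0"
    and l: "0 \<le> l"
  obtains Q where "mat_inverse (l \<cdot>\<^sub>m 1\<^sub>m p - T) = Some Q" "(l \<cdot>\<^sub>m 1\<^sub>m p - T) * Q = 1\<^sub>m p"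
    "Q \<in> carrier_mat p p"
proof -
  let ?A = "l \<cdot>\<^sub>m 1\<^sub>m p - T"
  have A: "?A \<in> carrier_mat p p" using T by auto
  have "det ?A \<noteq> 0"
  proof
    assume "det ?A = 0"
    then obtain v where v: "v \<in> carrier_vec p" "v \<noteq> 0\<^sub>v p" "?A *\<^sub>v v = 0\<^sub>v p"
      using det_0_iff_vec_prod_zero[OF A] by auto
    have "?A *\<^sub>v v = l \<cdot>\<^sub>v v - T *\<^sub>v v"
      using T v by (simp add: minus_mult_distrib_mat_vec[of _ p p] smult_one_mult_mat_vec)
    then have "T *\<^sub>v v = l \<cdot>\<^sub>v v" using v T by (intro eq_vecI) (auto simp: vec_eq_iff)
    then have "eigenvalue T l" unfolding eigenvalue_def eigenvector_def using v T by auto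
    from of_real_hom.eigenvalue_hom[OF T this] ev l show False by auto
  qed
  then have "?A \<in> Units (ring_mat TYPE(real) p ())" by (rule det_non_zero_imp_unit[OF A])
  then obtain Q where Q: "mat_inverse ?A = Some Q" using mat_inverse(1)[OF A, of "()"] by (cases "mat_inverse ?A") auto
  from mat_inverse(2)[OF A Q] Q that show ?thesis by blast
qed

lemma me_fun_eq_sum:
  assumes "T \<in> carrier_mat p p" "w \<in> carrier_vec p"
  shows "me_fun \<alpha> T w x = (\<Sum>i<p. \<alpha> $ i * (\<Sum>j<p. mexp (x \<cdot>\<^sub>m T) $$ (i,j) * w $ j))"
  unfolding me_fun_def using assms by (intro scalar_prod_mult_mat_vec_sum mexp_carrier)

lemma me_fun_has_real_derivative:
  assumes S: "S \<in> carrier_mat p p" and w: "w \<in> carrier_vec p"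
  shows "(me_fun \<alpha> S w has_real_derivative me_fun \<alpha> S (S *\<^sub>v w) x) (at x)"
proof -
  have E: "mexp (x \<cdot>\<^sub>m S) * S \<in> carrier_mat p p" by (rule mult_carrier_mat[OF mexp_carrier[OF S] S])
  have "((\<lambda>x. \<Sum>i<p. \<alpha> $ i * (\<Sum>j<p. mexp (x \<cdot>\<^sub>m S) $$ (i,j) * w $ j)) has_real_derivative
      (\<Sum>i<p. \<alpha> $ i * (\<Sum>j<p. (mexp (x \<cdot>\<^sub>m S) * S) $$ (i,j) * w $ j))) (at x)"
    by (intro DERIV_sum DERIV_cmult DERIV_cmult_right has_real_derivative_index_mexp[OF S]) auto
  moreover have "(\<Sum>i<p. \<alpha> $ i * (\<Sum>j<p. (mexp (x \<cdot>\<^sub>m S) * S) $$ (i,j) * w $ j)) = me_fun \<alpha> S (S *\<^sub>v w) x"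
    unfolding scalar_prod_mult_mat_vec_sum[OF E w, symmetric] me_fun_def
    using assoc_mult_mat_vec[OF mexp_carrier[OF S] S w] by simp
  moreover have "me_fun \<alpha> S w = (\<lambda>x. \<Sum>i<p. \<alpha> $ i * (\<Sum>j<p. mexp (x \<cdot>\<^sub>m S) $$ (i,j) * w $ j))"
    using me_fun_eq_sum[OF S w] by blast
  ultimately show ?thesis by simp
qed

lemma me_fun_uminus:
  assumes "S \<in> carrier_mat p p" "w \<in> carrier_vec p"
  shows "me_fun \<alpha> S (- w) x = - me_fun \<alpha> S w x"
  using assms by (simp add: me_fun_eq_sum[of _ p] sum_negf)

lemma me_fun_plus_smult_one:
  assumes "T \<in> carrier_mat p p" "w \<in> carrier_vec p"
  shows "me_fun \<alpha> (T + d \<cdot>\<^sub>m 1\<^sub>m p) w x = exp (d*x) * me_fun \<alpha> T w x"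
  using assms by (simp add: me_fun_eq_sum[of _ p] index_mexp_plus_smult_one sum_distrib_left mult_ac)

lemma me_fun_exponential_decay:
  fixes T :: "real mat"
  assumes T: "T \<in> carrier_mat p p" and w: "w \<in> carrier_vec p"
    and ev: "\<forall>z. eigenvalue (map_mat complex_of_real T) z \<longrightarrow> Re z < 0"
  obtains K \<epsilon> where "\<epsilon> > 0" "\<And>x. x \<ge> 0 \<Longrightarrow> \<bar>me_fun \<alpha> T w x\<bar> \<le> K * exp (-\<epsilon>*x)"
proof -
  obtain c \<epsilon> where \<epsilon>: "\<epsilon> > 0"
    and c: "\<And>x i j. x \<ge> 0 \<Longrightarrow> i < p \<Longrightarrow> j < p \<Longrightarrow> \<bar>mexp (x \<cdot>\<^sub>m T) $$ (i,j)\<bar> \<le> c * exp (-\<epsilon>*x)"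
    by (rule mexp_exponential_decay[OF T ev]) blast
  have bound: "\<bar>me_fun \<alpha> T w x\<bar> \<le> ((\<Sum>i<p. \<bar>\<alpha> $ i\<bar>) * (\<Sum>j<p. \<bar>w $ j\<bar>) * c) * exp (-\<epsilon>*x)" if x: "x \<ge> 0" for x
  proof -
    have "\<bar>me_fun \<alpha> T w x\<bar> \<le> (\<Sum>i<p. \<bar>\<alpha> $ i\<bar> * (\<Sum>j<p. \<bar>mexp (x \<cdot>\<^sub>m T) $$ (i,j)\<bar> * \<bar>w $ j\<bar>))"
      unfolding me_fun_eq_sum[OF T w]
      by (rule order_trans[OF sum_abs], rule sum_mono)
        (auto simp: abs_mult intro!: mult_left_mono order_trans[OF sum_abs])
    also have "\<dots> \<le> (\<Sum>i<p. \<bar>\<alpha> $ i\<bar> * (\<Sum>j<p. c * exp (-\<epsilon>*x) * \<bar>w $ j\<bar>))"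
      using x by (intro sum_mono mult_left_mono mult_right_mono c) auto
    also have "\<dots> = (\<Sum>i<p. \<bar>\<alpha> $ i\<bar> * (c * exp (-\<epsilon>*x) * (\<Sum>j<p. \<bar>w $ j\<bar>)))"
      by (simp add: sum_distrib_left)
    also have "\<dots> = (\<Sum>i<p. \<bar>\<alpha> $ i\<bar>) * (c * exp (-\<epsilon>*x) * (\<Sum>j<p. \<bar>w $ j\<bar>))"
      by (rule sum_distrib_right[symmetric])
    also have "\<dots> = ((\<Sum>i<p. \<bar>\<alpha> $ i\<bar>) * (\<Sum>j<p. \<bar>w $ j\<bar>) * c) * exp (-\<epsilon>*x)"
      by (simp add: mult_ac)
    finally show ?thesis .
  qed
  show ?thesis by (rule that[OF \<epsilon> bound])
qed

lemma me_fun_shift_exponential_decay: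
  fixes T :: "real mat"
  assumes T: "T \<in> carrier_mat p p" and w: "w \<in> carrier_vec p"
    and ev: "\<forall>z. eigenvalue (map_mat complex_of_real T) z \<longrightarrow> Re z < 0" and l: "0 \<le> l"
  obtains K \<epsilon> where "\<epsilon> > 0" "\<And>x. x \<ge> 0 \<Longrightarrow> \<bar>me_fun \<alpha> (T + (-l) \<cdot>\<^sub>m 1\<^sub>m p) w x\<bar> \<le> K * exp (-\<epsilon>*x)"
proof -
  obtain K \<epsilon> where \<epsilon>: "\<epsilon> > 0" and K: "\<And>x. x \<ge> 0 \<Longrightarrow> \<bar>me_fun \<alpha> T w x\<bar> \<le> K * exp (-\<epsilon>*x)"
    by (rule me_fun_exponential_decay[OF T w ev]) blast
  have "\<bar>me_fun \<alpha> (T + (-l) \<cdot>\<^sub>m 1\<^sub>m p) w x\<bar> \<le> \<bar>me_fun \<alpha> T w x\<bar>" if "x \<ge> 0" for x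
    unfolding me_fun_plus_smult_one[OF T w] using that l
    by (simp add: abs_mult mult_left_le_one_le mult_nonneg_nonneg)
  with K have "\<bar>me_fun \<alpha> (T + (-l) \<cdot>\<^sub>m 1\<^sub>m p) w x\<bar> \<le> K * exp (-\<epsilon>*x)" if "x \<ge> 0" for x
    using that by (meson order_trans)
  with \<epsilon> that show ?thesis by blast
qed

lemma mult_mat_vec_pow_right_inverse_Suc:
  assumes A: "A \<in> carrier_mat p p" and Q: "Q \<in> carrier_mat p p" and AQ: "A * Q = 1\<^sub>m p"
    and t: "t \<in> carrier_vec p"
  shows "A *\<^sub>v (Q ^\<^sub>m Suc m *\<^sub>v t) = Q ^\<^sub>m m *\<^sub>v t"
proof -
  have "A *\<^sub>v (Q ^\<^sub>m Suc m *\<^sub>v t) = (A * Q) *\<^sub>v (Q ^\<^sub>m m *\<^sub>v t)"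
    unfolding pow_mat_Suc_left[OF Q]
    using assoc_mult_mat_vec[OF Q pow_carrier_mat[OF Q] t]
      assoc_mult_mat_vec[OF A Q mult_mat_vec_carrier[OF pow_carrier_mat[OF Q] t]]
    by simp
  then show ?thesis using AQ mult_mat_vec_carrier[OF pow_carrier_mat[OF Q] t] by simp
qed

lemma set_integrable_pow_mult_exp:
  assumes e: "(\<epsilon>::real) > 0"
  shows "set_integrable lborel {0..} (\<lambda>x. x^k * exp (-\<epsilon>*x))"
proof -
  have "(\<integral>\<^sup>+x. ennreal ((x::real)^k * exp (-x) * indicator {0..} x) \<partial>lborel)
      = (\<integral>\<^sup>+x. ennreal (x^k * exp (-x)) * indicator {0..} x \<partial>lborel)"
    by (intro nn_integral_cong) (auto split: split_indicator)
  also have "\<dots> = ennreal (fact k)"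
    using nn_intergal_power_times_exp_Ici[of k] by (simp add: of_nat_fact)
  finally have "integrable lborel (\<lambda>x::real. x^k * exp (-x) * indicator {0..} x)"
    by (intro integrableI_nn_integral_finite[where x = "fact k"]) (auto split: split_indicator)
  from lborel_integrable_real_affine[OF this, of \<epsilon> 0] e
  have "integrable lborel (\<lambda>x. \<epsilon>^k * (indicator {0..} x *\<^sub>R (x^k * exp (-\<epsilon>*x))))"
    by (simp add: power_mult_distrib zero_le_mult_iff indicator_def mult_ac cong: if_cong)
  then have "integrable lborel (\<lambda>x. (1/\<epsilon>^k) * (\<epsilon>^k * (indicator {0..} x *\<^sub>R (x^k * exp (-\<epsilon>*x)))))"
    by (rule integrable_mult_right)
  then show ?thesis unfolding set_integrable_def using e by simp
qed

lemma set_integral_Ici_of_has_real_derivative: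
  fixes f F :: "real \<Rightarrow> real"
  assumes F: "\<And>x. (F has_real_derivative f x) (at x)" and f: "continuous_on UNIV f"
    and fi: "set_integrable lborel {0..} f" and lim: "(F \<longlongrightarrow> 0) at_top"
  shows "(LINT x:{0..}|lborel. f x) = - F 0"
proof -
  have "eventually (\<lambda>b. (LINT x:{0..b}|lborel. f x) = F b - F 0) at_top"
  proof (rule eventually_at_top_linorderI[of 0])
    fix b :: real assume b: "b \<ge> 0"
    show "(LINT x:{0..b}|lborel. f x) = F b - F 0"
      unfolding set_lebesgue_integral_def
      using F continuous_on_subset[OF f]
      by (intro integral_FTC_atLeastAtMost[OF b])
        (auto simp: has_real_derivative_iff_has_vector_derivative has_vector_derivative_at_within)
  qed
  moreover have "((\<lambda>b. F b - F 0) \<longlongrightarrow> 0 - F 0) at_top" by (intro tendsto_diff lim tendsto_const)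
  ultimately have "((\<lambda>b. LINT x:{0..b}|lborel. f x) \<longlongrightarrow> - F 0) at_top"
    by (simp add: tendsto_cong)
  moreover have "((\<lambda>b. LINT x:{0..b}|lborel. f x) \<longlongrightarrow> (LINT x:{0..}|lborel. f x)) at_top"
    by (rule tendsto_set_lebesgue_integral_at_top[OF _ fi]) auto
  ultimately show ?thesis using tendsto_unique by force
qed

lemma set_integrable_pow_mult_of_exp_bound:
  fixes h :: "real \<Rightarrow> real"
  assumes h: "\<And>x. x \<ge> 0 \<Longrightarrow> \<bar>h x\<bar> \<le> K * exp (-\<epsilon>*x)" and e: "\<epsilon> > 0" and hc: "continuous_on UNIV h"
  shows "set_integrable lborel {0..} (\<lambda>x. x^k * h x)"
proof (rule set_integrable_bound)
  show "set_integrable lborel {0..} (\<lambda>x. K * (x^k * exp (-\<epsilon>*x)))"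
    using set_integrable_pow_mult_exp[OF e, of k] by (intro set_integrable_mult_right) auto
  show "set_borel_measurable lborel {0..} (\<lambda>x. x^k * h x)"
    unfolding set_borel_measurable_def using borel_measurable_continuous_onI[OF hc] by measurable
  have "norm (x^k * h x) \<le> norm (K * (x^k * exp (-\<epsilon>*x)))" if x: "x \<ge> 0" for x
  proof -
    have "norm (x^k * h x) \<le> x^k * (K * exp (-\<epsilon>*x))"
      using h[OF x] x by (simp add: abs_mult mult_left_mono)
    also have "\<dots> \<le> norm (K * (x^k * exp (-\<epsilon>*x)))" by (simp add: mult_ac)
    finally show ?thesis .
  qed
  then show "AE x in lborel. x \<in> {0..} \<longrightarrow> norm (x^k * h x) \<le> norm (K * (x^k * exp (-\<epsilon>*x)))"
    by (intro AE_I2) auto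
qed

lemma tendsto_pow_mult_of_exp_bound:
  fixes h :: "real \<Rightarrow> real"
  assumes h: "\<And>x. x \<ge> 0 \<Longrightarrow> \<bar>h x\<bar> \<le> K * exp (-\<epsilon>*x)" and e: "\<epsilon> > 0"
  shows "((\<lambda>x. x^k * h x) \<longlongrightarrow> 0) at_top"
proof (rule Lim_null_comparison)
  have "K * (x^k * exp (-\<epsilon>*x)) = K / \<epsilon>^k * ((\<epsilon>*x)^k / exp (\<epsilon>*x))" for x
    using e by (simp add: power_mult_distrib exp_minus field_simps)
  moreover have "norm (x^k * h x) \<le> K * (x^k * exp (-\<epsilon>*x))" if "x \<ge> 0" for x
    using h[OF that] that by (simp add: abs_mult mult_left_mono mult.left_commute[of K])
  ultimately show "eventually (\<lambda>x. norm (x^k * h x) \<le> K / \<epsilon>^k * ((\<epsilon>*x)^k / exp (\<epsilon>*x))) at_top"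
    by (intro eventually_at_top_linorderI[of 0]) auto
  have "filterlim (\<lambda>x. \<epsilon>*x) at_top at_top"
    by (rule filterlim_tendsto_pos_mult_at_top[OF tendsto_const e filterlim_ident])
  from filterlim_compose[OF tendsto_power_div_exp_0[of k] this]
  show "((\<lambda>x. K / \<epsilon>^k * ((\<epsilon>*x)^k / exp (\<epsilon>*x))) \<longlongrightarrow> 0) at_top"
    by (intro tendsto_mult_right_zero) (simp add: o_def)
qed

lemma set_integral_pow_mult_antiderivative_chain:
  fixes \<psi> :: "nat \<Rightarrow> real \<Rightarrow> real"
  assumes deriv: "\<And>m x. (\<psi> (Suc m) has_real_derivative - \<psi> m x) (at x)"
    and cont: "\<And>m. continuous_on UNIV (\<psi> m)"
    and int: "\<And>k m. set_integrable lborel {0..} (\<lambda>x. x^k * \<psi> m x)"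
    and lim: "\<And>k m. ((\<lambda>x. x^k * \<psi> m x) \<longlongrightarrow> 0) at_top"
  shows "(LINT x:{0..}|lborel. x^k * \<psi> m x) = fact k * \<psi> (m + k + 1) 0"
proof (induct k arbitrary: m)
  case 0
  have "(LINT x:{0..}|lborel. \<psi> m x) = - (- \<psi> (Suc m) 0)"
    using DERIV_minus[OF deriv] cont int[of 0] tendsto_minus[OF lim[of 0 "Suc m"]]
    by (intro set_integral_Ici_of_has_real_derivative[where F = "\<lambda>x. - \<psi> (Suc m) x"]) auto
  then show ?case by simp
next
  case (Suc k)
  define f where "f x = x^Suc k * \<psi> m x - real (Suc k) * (x^k * \<psi> (Suc m) x)" for x
  have "(LINT x:{0..}|lborel. f x) = - (- (0^Suc k * \<psi> (Suc m) 0))"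
  proof (rule set_integral_Ici_of_has_real_derivative[where F = "\<lambda>x. - (x^Suc k * \<psi> (Suc m) x)"])
    show "((\<lambda>x. - (x^Suc k * \<psi> (Suc m) x)) has_real_derivative f x) (at x)" for x
      by (rule DERIV_cong[OF DERIV_minus[OF DERIV_mult[OF DERIV_pow deriv]]]) (simp add: f_def algebra_simps)
    show "continuous_on UNIV f" unfolding f_def
      by (intro continuous_intros cont[THEN continuous_on_subset]) auto
    show "set_integrable lborel {0..} f" unfolding f_def
      by (intro set_integral_diff(1) set_integrable_mult_right int)
    show "((\<lambda>x. - (x^Suc k * \<psi> (Suc m) x)) \<longlongrightarrow> 0) at_top"
      using tendsto_minus[OF lim[of "Suc k" "Suc m"]] by simp
  qed
  moreover have "(LINT x:{0..}|lborel. f x)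
      = (LINT x:{0..}|lborel. x^Suc k * \<psi> m x) - real (Suc k) * (LINT x:{0..}|lborel. x^k * \<psi> (Suc m) x)"
    unfolding f_def set_integral_mult_right[symmetric]
    by (intro set_integral_diff(2) int set_integrable_mult_right)
  ultimately show ?case using Suc[of "Suc m"] by (simp add: algebra_simps)
qed

text \<open>With \<open>S = T - \<lambda> I\<close> and \<open>Q = (\<lambda> I - T)\<^sup>-\<^sup>1\<close>, the functions \<open>\<psi>\<^sub>m(x) = \<alpha> e\<^sup>x\<^sup>S Q\<^sup>m t\<close> satisfy
  \<open>\<psi>\<^sub>m\<^sub>+\<^sub>1' = -\<psi>\<^sub>m\<close> and \<open>\<psi>\<^sub>0(x) = e\<^sup>-\<^sup>\<lambda>\<^sup>x \<alpha> e\<^sup>x\<^sup>T t\<close>.\<close>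

lemma me_fun_moment_integral:
  fixes T :: "real mat"
  assumes T: "T \<in> carrier_mat p p" and t: "t \<in> carrier_vec p"
    and ev: "\<forall>z. eigenvalue (map_mat complex_of_real T) z \<longrightarrow> Re z < 0" and l: "0 \<le> l"
  shows "set_integrable lborel {0..} (\<lambda>x. x^n * exp (-l*x) * me_fun \<alpha> T t x)"
    and "(LINT x:{0..}|lborel. x^n * exp (-l*x) * me_fun \<alpha> T t x) = C_ET \<alpha> T t n l"
proof -
  obtain Q where Q_inv: "mat_inverse (l \<cdot>\<^sub>m 1\<^sub>m p - T) = Some Q"
    and AQ: "(l \<cdot>\<^sub>m 1\<^sub>m p - T) * Q = 1\<^sub>m p" and Q: "Q \<in> carrier_mat p p"
    using mat_inverse_smult_one_minus[OF T ev l] by blast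
  define S where "S = T + (-l) \<cdot>\<^sub>m 1\<^sub>m p"
  have S: "S \<in> carrier_mat p p" using T unfolding S_def by auto
  define w where "w m = Q ^\<^sub>m m *\<^sub>v t" for m
  have w: "w m \<in> carrier_vec p" for m unfolding w_def by (rule mult_mat_vec_carrier[OF pow_carrier_mat[OF Q] t])
  have A: "l \<cdot>\<^sub>m 1\<^sub>m p - T \<in> carrier_mat p p" using T by auto
  have SA: "S = - (l \<cdot>\<^sub>m 1\<^sub>m p - T)" unfolding S_def using T by (intro eq_matI) auto
  have "S *\<^sub>v w (Suc m) = - ((l \<cdot>\<^sub>m 1\<^sub>m p - T) *\<^sub>v w (Suc m))" for m
    unfolding SA using A w[of "Suc m"] by (intro uminus_mult_mat_vec) auto
  then have Sw: "S *\<^sub>v w (Suc m) = - w m" for m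
    unfolding w_def mult_mat_vec_pow_right_inverse_Suc[OF A Q AQ t] .
  define \<psi> where "\<psi> m = me_fun \<alpha> S (w m)" for m
  have deriv: "(\<psi> (Suc m) has_real_derivative - \<psi> m x) (at x)" for m x
    using me_fun_has_real_derivative[OF S w[of "Suc m"], of \<alpha> x]
    unfolding Sw me_fun_uminus[OF S w] \<psi>_def .
  have cont: "continuous_on UNIV (\<psi> m)" for m
    using DERIV_isCont[OF me_fun_has_real_derivative[OF S w[of m]]] unfolding \<psi>_def
    by (intro continuous_at_imp_continuous_on) auto
  have bound: "\<exists>K \<epsilon>. \<epsilon> > 0 \<and> (\<forall>x\<ge>0. \<bar>\<psi> m x\<bar> \<le> K * exp (-\<epsilon>*x))" for m
    unfolding \<psi>_def S_def by (rule me_fun_shift_exponential_decay[OF T w ev l]) blast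
  have int: "set_integrable lborel {0..} (\<lambda>x. x^k * \<psi> m x)" for k m
    using bound[of m] cont set_integrable_pow_mult_of_exp_bound by blast
  have lim: "((\<lambda>x. x^k * \<psi> m x) \<longlongrightarrow> 0) at_top" for k m
    using bound[of m] tendsto_pow_mult_of_exp_bound by blast
  have \<psi>0: "x^n * exp (-l*x) * me_fun \<alpha> T t x = x^n * \<psi> 0 x" for x
  proof -
    have "w 0 = t" unfolding w_def using t Q by simp
    then show ?thesis unfolding \<psi>_def S_def using me_fun_plus_smult_one[OF T t] by simp
  qed
  show "set_integrable lborel {0..} (\<lambda>x. x^n * exp (-l*x) * me_fun \<alpha> T t x)"
    unfolding \<psi>0 by (rule int)
  have "\<psi> (n+1) 0 = \<alpha> \<bullet> (Q ^\<^sub>m (n+1) *\<^sub>v t)"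
    unfolding \<psi>_def me_fun_def mexp_zero_smult[OF S] using w[of "n+1"] by (simp add: w_def)
  moreover have "dim_row T = p" using T by simp
  ultimately show "(LINT x:{0..}|lborel. x^n * exp (-l*x) * me_fun \<alpha> T t x) = C_ET \<alpha> T t n l"
    unfolding \<psi>0 set_integral_pow_mult_antiderivative_chain[where \<psi> = \<psi>, OF deriv cont int lim] C_ET_def
    by (simp add: Q_inv)
qed

section \<open>The one-dimensional Esscher transform\<close>

lemma t_blk_carrier: "t \<in> carrier_vec p \<Longrightarrow> t_blk t n \<in> carrier_vec (Suc n * p)"
  unfolding t_blk_def by simp

lemma alpha_blk_carrier: "\<alpha> \<in> carrier_vec p \<Longrightarrow> alpha_blk \<alpha> n \<in> carrier_vec (Suc n * p)"
  unfolding alpha_blk_def by simp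

lemma mexp_block_mat_mult_t_blk:
  fixes T :: "real mat"
  assumes T: "T \<in> carrier_mat p p" and t: "t \<in> carrier_vec p" and u: "u < p"
  shows "(mexp (x \<cdot>\<^sub>m block_mat T n l) *\<^sub>v t_blk t n) $ u = x^n / fact n * exp (-l*x) * (mexp (x \<cdot>\<^sub>m T) *\<^sub>v t) $ u"
proof -
  let ?E = "mexp (x \<cdot>\<^sub>m block_mat T n l)" and ?t = "t_blk t n"
  have E: "?E \<in> carrier_mat (Suc n * p) (Suc n * p)" by (rule mexp_carrier[OF block_mat_carrier[OF T]])
  have tb: "?t \<in> carrier_vec (Suc n * p)" by (rule t_blk_carrier[OF t])
  have tb_low: "?t $ (a*p+v) = 0" if "a < n" "v < p" for a v
  proof -
    have "a*p+v < Suc a * p" using that by simp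
    also have "\<dots> \<le> n * p" using that by (intro mult_right_mono) auto
    finally show ?thesis using t unfolding t_blk_def by simp
  qed
  have tb_last: "?t $ (n*p+v) = t $ v" if "v < p" for v
    using t that block_index_less[of n n v p] unfolding t_blk_def by simp
  have "(?E *\<^sub>v ?t) $ u = (\<Sum>c<Suc n * p. ?E $$ (u,c) * ?t $ c)"
    using block_index_less[of 0 n u p] u by (intro index_mult_mat_vec_sum[OF E tb]) simp
  also have "\<dots> = (\<Sum>a<Suc n. \<Sum>v<p. ?E $$ (u,a*p+v) * ?t $ (a*p+v))"
    by (rule sum_lessThan_mult_blocks)
  also have "\<dots> = (\<Sum>v<p. ?E $$ (u,n*p+v) * t $ v)"
    using tb_low tb_last by (simp add: sum.neutral)
  also have "\<dots> = x^n / fact n * exp (-l*x) * (mexp (x \<cdot>\<^sub>m T) *\<^sub>v t) $ u"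
    using index_mult_mat_vec_sum[OF mexp_carrier[OF T] t u]
    by (simp add: index_mexp_block_mat[OF T u] sum_distrib_left mult_ac)
  finally show ?thesis .
qed

lemma alpha_blk_scalar_prod:
  assumes a: "\<alpha> \<in> carrier_vec p" and w: "w \<in> carrier_vec (Suc n * p)"
  shows "alpha_blk \<alpha> n \<bullet> w = (\<Sum>u<p. \<alpha> $ u * w $ u)"
proof -
  have "alpha_blk \<alpha> n \<bullet> w = (\<Sum>c<Suc n * p. alpha_blk \<alpha> n $ c * w $ c)"
    by (rule scalar_prod_sum_lessThan[OF w])
  also have "\<dots> = (\<Sum>a<Suc n. \<Sum>u<p. alpha_blk \<alpha> n $ (a*p+u) * w $ (a*p+u))"
    by (rule sum_lessThan_mult_blocks)
  also have "\<dots> = (\<Sum>a<Suc n. if a = 0 then (\<Sum>u<p. \<alpha> $ u * w $ u) else 0)"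
  proof (intro sum.cong refl)
    fix a assume "a \<in> {..<Suc n}"
    show "(\<Sum>u<p. alpha_blk \<alpha> n $ (a*p+u) * w $ (a*p+u)) = (if a = 0 then (\<Sum>u<p. \<alpha> $ u * w $ u) else 0)"
    proof (cases "a = 0")
      case False
      then have "\<not> a*p+u < p" for u by (cases a) auto
      with False a \<open>a \<in> {..<Suc n}\<close> show ?thesis
        using block_index_less[of a n _ p] by (auto simp: alpha_blk_def intro!: sum.neutral)
    qed (use a block_index_less[of 0 n _ p] in \<open>auto simp: alpha_blk_def\<close>)
  qed
  finally show ?thesis by simp
qed

text \<open>If \<open>C\<^sup>E\<^sup>T = 0\<close>, both sides are \<open>0\<close> by the convention \<open>x / 0 = 0\<close>.\<close>

lemma f_ET_eq:
  fixes T :: "real mat"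
  assumes T: "T \<in> carrier_mat p p" and a: "\<alpha> \<in> carrier_vec p" and t: "t \<in> carrier_vec p"
  shows "f_ET \<alpha> T t n l x = x^n * exp (-l*x) * me_fun \<alpha> T t x / C_ET \<alpha> T t n l"
proof -
  have E: "mexp (x \<cdot>\<^sub>m block_mat T n l) *\<^sub>v t_blk t n \<in> carrier_vec (Suc n * p)"
    by (rule mult_mat_vec_carrier[OF mexp_carrier[OF block_mat_carrier[OF T]] t_blk_carrier[OF t]])
  have "alpha_blk \<alpha> n \<bullet> (mexp (x \<cdot>\<^sub>m block_mat T n l) *\<^sub>v t_blk t n)
      = x^n / fact n * exp (-l*x) * me_fun \<alpha> T t x"
    unfolding alpha_blk_scalar_prod[OF a E] me_fun_def
      scalar_prod_sum_lessThan[OF mult_mat_vec_carrier[OF mexp_carrier[OF T] t]]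
    by (simp add: mexp_block_mat_mult_t_blk[OF T t] sum_distrib_left mult_ac)
  then show ?thesis
    unfolding f_ET_def me_fun_def smult_scalar_prod_distrib[OF alpha_blk_carrier[OF a] E]
    by (cases "C_ET \<alpha> T t n l = 0") simp_all
qed

lemma set_integral_weighted_density_pos:
  fixes g w :: "real \<Rightarrow> real"
  assumes g: "\<And>x. x \<ge> 0 \<Longrightarrow> 0 \<le> g x" "(LINT x:{0..}|lborel. g x) \<noteq> 0"
    and w: "\<And>x. x \<ge> 0 \<Longrightarrow> 0 \<le> w x" "\<And>x. x > 0 \<Longrightarrow> 0 < w x" and int: "set_integrable lborel {0..} (\<lambda>x. w x * g x)"
  shows "(LINT x:{0..}|lborel. w x * g x) > 0"
proof -
  have nonneg: "0 \<le> indicator {0..} x *\<^sub>R (w x * g x)" for x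
    using g(1)[of x] w(1)[of x] by (simp split: split_indicator)
  have "(LINT x:{0..}|lborel. w x * g x) \<noteq> 0"
  proof
    assume "(LINT x:{0..}|lborel. w x * g x) = 0"
    then have "integral\<^sup>L lborel (\<lambda>x. indicator {0..} x *\<^sub>R (w x * g x)) = 0"
      unfolding set_lebesgue_integral_def .
    then have "AE x in lborel. indicator {0..} x *\<^sub>R (w x * g x) = 0"
      using integral_nonneg_eq_0_iff_AE[OF int[unfolded set_integrable_def] AE_I2[OF nonneg]] by simp
    then have "AE x in lborel. indicator {0..} x *\<^sub>R g x = 0"
      using AE_lborel_singleton[of "0::real"]
    proof eventually_elim
      case (elim x)
      show ?case
      proof (cases "x > 0")
        case True
        with elim w(2)[OF True] show ?thesis by simp
      next
        case False
        with elim have "x \<notin> {0..}" by simp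
        then show ?thesis by simp
      qed
    qed
    then have "(LINT x:{0..}|lborel. g x) = 0"
      unfolding set_lebesgue_integral_def by (rule integral_eq_zero_AE)
    with g(2) show False ..
  qed
  moreover have "(LINT x:{0..}|lborel. w x * g x) \<ge> 0"
    unfolding set_lebesgue_integral_def using nonneg by (rule Bochner_Integration.integral_nonneg)
  ultimately show ?thesis by (simp add: order_less_le)
qed

lemma me_density_tripleD:
  assumes "me_density_triple \<alpha> T t"
  shows "T \<in> carrier_mat (dim_row T) (dim_row T)" "\<alpha> \<in> carrier_vec (dim_row T)" "t \<in> carrier_vec (dim_row T)"
    "\<forall>z. eigenvalue (map_mat complex_of_real T) z \<longrightarrow> Re z < 0"
    "\<And>x. x \<ge> 0 \<Longrightarrow> 0 \<le> me_fun \<alpha> T t x" "(LINT x:{0..}|lborel. me_fun \<alpha> T t x) = 1"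
  using assms unfolding me_density_triple_def me_triple_def prob_density_nonneg_def by auto

lemma C_ET_pos:
  assumes me: "me_density_triple \<alpha> T t" and l: "0 \<le> l"
  shows "C_ET \<alpha> T t n l > 0"
proof -
  note D = me_density_tripleD[OF me]
  have "(LINT x:{0..}|lborel. (x^n * exp (-l*x)) * me_fun \<alpha> T t x) > 0"
    using D(5,6) me_fun_moment_integral(1)[OF D(1,3,4) l]
    by (intro set_integral_weighted_density_pos) (simp_all add: zero_le_mult_iff)
  then show ?thesis using me_fun_moment_integral(2)[OF D(1,3,4) l] by simp
qed

lemma f_ET_is_me_density:
  assumes me: "me_density_triple \<alpha> T t" and l: "0 \<le> l"
  shows "is_me_density (f_ET \<alpha> T t n l)"
proof -
  let ?C = "C_ET \<alpha> T t n l" and ?p = "dim_row T"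
  note D = me_density_tripleD[OF me]
  note I = me_fun_moment_integral[OF D(1,3,4) l, of n \<alpha>]
  have C: "?C > 0" by (rule C_ET_pos[OF me l])
  have f: "f_ET \<alpha> T t n l = (\<lambda>x. (1 / ?C) * (x^n * exp (-l*x) * me_fun \<alpha> T t x))"
    using f_ET_eq[OF D(1-3)] by auto
  have "me_triple ((fact n / ?C) \<cdot>\<^sub>v alpha_blk \<alpha> n) (block_mat T n l) (t_blk t n)"
    using block_mat_carrier[OF D(1), of n l] eigenvalue_block_mat_Re_neg[OF D(1,4) l, of n] D(2,3)
    by (auto simp: me_triple_def alpha_blk_def t_blk_def)
  moreover have "prob_density_nonneg (f_ET \<alpha> T t n l)"
    unfolding prob_density_nonneg_def f set_integral_mult_right I(2)
    using C D(5) I(1) by (auto intro: set_integrable_mult_right)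
  ultimately show ?thesis
    unfolding is_me_density_def me_density_triple_def f_ET_def[abs_def] by blast
qed

section \<open>Products over the coordinates\<close>

lemma finite_idx_set: "finite (idx_set M L)"
  unfolding idx_set_def by (rule finite_PiE) auto

lemma idx_set_range: "i \<in> idx_set M L \<Longrightarrow> k < M \<Longrightarrow> i k \<in> {1..L}"
  unfolding idx_set_def by (auto simp: PiE_iff)

lemma indicator_orthant: "indicator (orthant M) y = (\<Prod>k<M. indicator {0..} (y k) :: real)"
proof (cases "\<forall>k<M. 0 \<le> y k")
  case False
  then obtain k where "k < M" "y k < 0" by auto
  then have "(\<Prod>k<M. indicator {0..} (y k) :: real) = 0"
    by (intro prod_zero) (auto intro!: bexI[of _ k])
  with False show ?thesis unfolding orthant_def by (auto simp: indicator_def)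
qed (simp add: orthant_def indicator_def)

lemma set_integral_orthant_weighted_mme_sum:
  fixes w g :: "nat \<Rightarrow> real \<Rightarrow> real"
  assumes int: "\<And>k j. k < M \<Longrightarrow> j \<in> {1..L} \<Longrightarrow> set_integrable lborel {0..} (\<lambda>x. w k x * g j x)"
  shows "(LINT y:orthant M | PiM {..<M} (\<lambda>_. lborel). (\<Prod>k<M. w k (y k)) * mme_sum M L q g y)
       = (\<Sum>i\<in>idx_set M L. q i * (\<Prod>k<M. LINT x:{0..}|lborel. w k x * g (i k) x))"
proof -
  interpret product_sigma_finite "\<lambda>_::nat. lborel::real measure" by standard
  define H where "H k j x = indicator {0..} x *\<^sub>R (w k x * g j x)" for k j and x :: real
  have H: "integrable lborel (H k (i k))" if "i \<in> idx_set M L" "k < M" for i k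
    using int[OF that(2) idx_set_range[OF that]] unfolding set_integrable_def H_def .
  have "indicator (orthant M) y *\<^sub>R ((\<Prod>k<M. w k (y k)) * mme_sum M L q g y)
      = (\<Sum>i\<in>idx_set M L. q i * (\<Prod>k<M. H k (i k) (y k)))" for y
    unfolding indicator_orthant mme_sum_def H_def
    by (simp add: sum_distrib_left prod.distrib mult_ac)
  then have "(LINT y:orthant M | PiM {..<M} (\<lambda>_. lborel). (\<Prod>k<M. w k (y k)) * mme_sum M L q g y)
      = integral\<^sup>L (PiM {..<M} (\<lambda>_. lborel)) (\<lambda>y. \<Sum>i\<in>idx_set M L. q i * (\<Prod>k<M. H k (i k) (y k)))"
    unfolding set_lebesgue_integral_def by simp
  also have "\<dots> = (\<Sum>i\<in>idx_set M L. integral\<^sup>L (PiM {..<M} (\<lambda>_. lborel)) (\<lambda>y. q i * (\<Prod>k<M. H k (i k) (y k))))"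
    using H by (intro Bochner_Integration.integral_sum integrable_mult_right product_integrable_prod) auto
  also have "\<dots> = (\<Sum>i\<in>idx_set M L. q i * (\<Prod>k<M. integral\<^sup>L lborel (H k (i k))))"
  proof (intro sum.cong refl)
    fix i assume "i \<in> idx_set M L"
    then have "integral\<^sup>L (PiM {..<M} (\<lambda>_. lborel)) (\<lambda>y. \<Prod>k<M. H k (i k) (y k))
        = (\<Prod>k<M. integral\<^sup>L lborel (H k (i k)))"
      using H by (intro product_integral_prod) auto
    then show "integral\<^sup>L (PiM {..<M} (\<lambda>_. lborel)) (\<lambda>y. q i * (\<Prod>k<M. H k (i k) (y k)))
        = q i * (\<Prod>k<M. integral\<^sup>L lborel (H k (i k)))" by simp
  qed
  finally show ?thesis unfolding H_def set_lebesgue_integral_def .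
qed

lemma weighted_mme_sum_eq_reweighted:
  fixes w g :: "nat \<Rightarrow> real \<Rightarrow> real" and c :: "nat \<Rightarrow> nat \<Rightarrow> real"
  assumes c: "\<And>i k. i \<in> idx_set M L \<Longrightarrow> k < M \<Longrightarrow> c k (i k) \<noteq> 0"
  shows "(\<Prod>k<M. w k (x k)) * mme_sum M L q g x / C
       = (\<Sum>i\<in>idx_set M L. (q i * (\<Prod>k<M. c k (i k)) / C) * (\<Prod>k<M. w k (x k) * g (i k) (x k) / c k (i k)))"
proof -
  have "(\<Prod>k<M. w k (x k)) * (q i * (\<Prod>k<M. g (i k) (x k))) / C
      = (q i * (\<Prod>k<M. c k (i k)) / C) * (\<Prod>k<M. w k (x k) * g (i k) (x k) / c k (i k))"
    if "i \<in> idx_set M L" for i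
  proof -
    have "(\<Prod>k<M. c k (i k)) \<noteq> 0" using c[OF that] by simp
    then show ?thesis unfolding prod_dividef prod.distrib by simp
  qed
  then show ?thesis
    unfolding mme_sum_def sum_distrib_left sum_divide_distrib by (rule sum.cong[OF refl])
qed

lemma sum_pushforward_weights:
  fixes q :: "'a \<Rightarrow> 'c::semiring_0" and F :: "'b \<Rightarrow> 'c"
  assumes "finite B" "\<And>a. a \<in> A \<Longrightarrow> f a \<in> B"
  shows "(\<Sum>b\<in>B. (\<Sum>a\<in>A. if b = f a then q a else 0) * F b) = (\<Sum>a\<in>A. q a * F (f a))"
proof -
  have "(\<Sum>b\<in>B. (\<Sum>a\<in>A. if b = f a then q a else 0) * F b)
      = (\<Sum>b\<in>B. \<Sum>a\<in>A. if b = f a then q a * F (f a) else 0)"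
    unfolding sum_distrib_right by (intro sum.cong refl) auto
  also have "\<dots> = (\<Sum>a\<in>A. \<Sum>b\<in>B. if b = f a then q a * F (f a) else 0)"
    by (rule sum.swap)
  also have "\<dots> = (\<Sum>a\<in>A. q a * F (f a))"
    using assms by (intro sum.cong refl) simp
  finally show ?thesis .
qed

text \<open>\<open>MMEam\<close> uses one family of densities for all coordinates; coordinate-dependent families
  \<open>G k j\<close> are merged into the single family indexed by \<open>k * L + j \<in> {1..M * L}\<close>.\<close>

lemma coordinatewise_mme_sum_in_MMEam:
  assumes "M > 0" "L > 0"
    and G: "\<And>k j. k < M \<Longrightarrow> j \<in> {1..L} \<Longrightarrow> is_me_density (G k j)"
    and q: "(\<Sum>i\<in>idx_set M L. q i) = 1"
    and h: "\<And>x. x \<in> orthant M \<Longrightarrow> h x = (\<Sum>i\<in>idx_set M L. q i * (\<Prod>k<M. G k (i k) (x k)))"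
    and h_nonneg: "\<And>x. x \<in> orthant M \<Longrightarrow> 0 \<le> h x"
  shows "h \<in> MMEam M"
proof -
  define enc where "enc i = (\<lambda>k. if k < M then k * L + i k else undefined)" for i :: "nat \<Rightarrow> nat"
  define fs where "fs j = G ((j - 1) div L) ((j - 1) mod L + 1)" for j
  define q' where "q' i' = (\<Sum>i\<in>idx_set M L. if i' = enc i then q i else 0)" for i'
  have fs_enc: "fs (enc i k) = G k (i k)" if i: "i \<in> idx_set M L" and k: "k < M" for i k
  proof -
    obtain j where j: "i k = Suc j" "j < L" using idx_set_range[OF i k] by (cases "i k") auto
    then have "enc i k - 1 = k * L + j" unfolding enc_def using k by simp
    moreover have "(k * L + j) div L = k" "(k * L + j) mod L = j" using j(2) by simp_all
    ultimately show ?thesis unfolding fs_def using j(1) by simp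
  qed
  have enc: "enc i \<in> idx_set M (M * L)" if i: "i \<in> idx_set M L" for i
    unfolding idx_set_def PiE_iff
  proof (intro conjI ballI)
    fix k assume "k \<in> {..<M}"
    then have k: "k < M" by simp
    have "k * L + i k \<le> Suc k * L" using idx_set_range[OF i k] by simp
    also have "\<dots> \<le> M * L" using k by (intro mult_right_mono) auto
    finally show "enc i k \<in> {1..M * L}" unfolding enc_def using k idx_set_range[OF i k] by auto
  qed (auto simp: enc_def extensional_def)
  have sum_q': "(\<Sum>i'\<in>idx_set M (M * L). q' i' * F i') = (\<Sum>i\<in>idx_set M L. q i * F (enc i))" for F
    unfolding q'_def by (rule sum_pushforward_weights[OF finite_idx_set enc])
  have "is_me_density (fs j)" if "j \<in> {1..M * L}" for j
  proof -
    from that have "(j - 1) div L < M" using \<open>L > 0\<close> by (auto simp: div_less_iff_less_mult)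
    moreover have "(j - 1) mod L < L" using \<open>L > 0\<close> by simp
    then have "(j - 1) mod L + 1 \<in> {1..L}" by simp
    ultimately show ?thesis unfolding fs_def by (rule G)
  qed
  moreover have "(\<Sum>i'\<in>idx_set M (M * L). q' i') = 1" using sum_q'[of "\<lambda>_. 1"] q by simp
  moreover have "h x = mme_sum M (M * L) q' fs x" if "x \<in> orthant M" for x
    unfolding mme_sum_def sum_q' h[OF that] using fs_enc by (intro sum.cong refl) simp
  ultimately show ?thesis
    unfolding MMEam_def using \<open>M > 0\<close> \<open>L > 0\<close> h_nonneg
    by (intro CollectI exI[of _ "M * L"] exI[of _ q'] exI[of _ fs]) auto
qed

lemma prod_pow_mult_exp_neg_sum:
  fixes x lam :: "nat \<Rightarrow> real"
  shows "(\<Prod>k<M. x k ^ n k) * exp (- (\<Sum>k<M. lam k * x k)) = (\<Prod>k<M. x k ^ n k * exp (- lam k * x k))"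
  by (simp add: exp_sum sum_negf[symmetric] prod.distrib)

lemma set_integral_orthant_esscher_mme_sum:
  assumes ME: "\<forall>j\<in>{1..L}. me_density_triple (\<alpha> j) (T j) (t j)" and lam: "\<forall>k<M. 0 \<le> lam k"
  shows "(LINT y:orthant M | PiM {..<M} (\<lambda>_. lborel).
            (\<Prod>k<M. y k ^ n k) * exp (- (\<Sum>k<M. lam k * y k)) * mme_sum M L p (\<lambda>j. me_fun (\<alpha> j) (T j) (t j)) y)
       = (\<Sum>i\<in>idx_set M L. p i * (\<Prod>k<M. C_ET (\<alpha> (i k)) (T (i k)) (t (i k)) (n k) (lam k)))"
proof -
  note D = me_density_tripleD[OF ME[rule_format]]
  have "(LINT y:orthant M | PiM {..<M} (\<lambda>_. lborel).
            (\<Prod>k<M. y k ^ n k * exp (- lam k * y k)) * mme_sum M L p (\<lambda>j. me_fun (\<alpha> j) (T j) (t j)) y)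
      = (\<Sum>i\<in>idx_set M L. p i *
           (\<Prod>k<M. LINT x:{0..}|lborel. x ^ n k * exp (- lam k * x) * me_fun (\<alpha> (i k)) (T (i k)) (t (i k)) x))"
    using me_fun_moment_integral(1)[OF D(1,3,4)] lam
    by (intro set_integral_orthant_weighted_mme_sum) (simp add: mult.assoc)
  also have "\<dots> = (\<Sum>i\<in>idx_set M L. p i * (\<Prod>k<M. C_ET (\<alpha> (i k)) (T (i k)) (t (i k)) (n k) (lam k)))"
    using me_fun_moment_integral(2)[OF D(1,3,4)] lam idx_set_range
    by (intro sum.cong prod.cong refl arg_cong2[where f = times]) simp
  finally show ?thesis unfolding prod_pow_mult_exp_neg_sum .
qed

lemma esscher_mme_sum_eq:
  assumes ME: "\<forall>j\<in>{1..L}. me_density_triple (\<alpha> j) (T j) (t j)" and lam: "\<forall>k<M. 0 \<le> lam k"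
  shows "(\<Prod>k<M. x k ^ n k) * exp (- (\<Sum>k<M. lam k * x k)) * mme_sum M L p (\<lambda>j. me_fun (\<alpha> j) (T j) (t j)) x / C
       = (\<Sum>i\<in>idx_set M L. (p i * (\<Prod>k<M. C_ET (\<alpha> (i k)) (T (i k)) (t (i k)) (n k) (lam k)) / C)
            * (\<Prod>k<M. f_ET (\<alpha> (i k)) (T (i k)) (t (i k)) (n k) (lam k) (x k)))"
proof -
  note D = me_density_tripleD[OF ME[rule_format]]
  have "(\<Prod>k<M. x k ^ n k * exp (- lam k * x k)) * mme_sum M L p (\<lambda>j. me_fun (\<alpha> j) (T j) (t j)) x / C
      = (\<Sum>i\<in>idx_set M L. (p i * (\<Prod>k<M. C_ET (\<alpha> (i k)) (T (i k)) (t (i k)) (n k) (lam k)) / C)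
          * (\<Prod>k<M. x k ^ n k * exp (- lam k * x k) * me_fun (\<alpha> (i k)) (T (i k)) (t (i k)) (x k)
                    / C_ET (\<alpha> (i k)) (T (i k)) (t (i k)) (n k) (lam k)))"
    using C_ET_pos[OF ME[rule_format]] lam idx_set_range
    by (intro weighted_mme_sum_eq_reweighted) (metis less_irrefl)
  also have "\<dots> = (\<Sum>i\<in>idx_set M L. (p i * (\<Prod>k<M. C_ET (\<alpha> (i k)) (T (i k)) (t (i k)) (n k) (lam k)) / C)
            * (\<Prod>k<M. f_ET (\<alpha> (i k)) (T (i k)) (t (i k)) (n k) (lam k) (x k)))"
    using f_ET_eq[OF D(1-3)] idx_set_range by (intro sum.cong prod.cong refl arg_cong2[where f = times]) simp
  finally show ?thesis unfolding prod_pow_mult_exp_neg_sum .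
qed

theorem theorem3:
  fixes M L :: nat
    and \<alpha> :: "nat \<Rightarrow> real vec" and T :: "nat \<Rightarrow> real mat" and t :: "nat \<Rightarrow> real vec"
    and p :: "(nat \<Rightarrow> nat) \<Rightarrow> real"
    and n :: "nat \<Rightarrow> nat" and lam :: "nat \<Rightarrow> real"
    and f fET :: "(nat \<Rightarrow> real) \<Rightarrow> real" and C :: real
  assumes "M > 0" and "L > 0"
    and ME: "\<forall>j\<in>{1..L}. me_density_triple (\<alpha> j) (T j) (t j)"
    and psum: "(\<Sum>i\<in>idx_set M L. p i) = 1"
    and f_def: "f = mme_sum M L p (\<lambda>j. me_fun (\<alpha> j) (T j) (t j))"
    and f_nonneg: "\<forall>x\<in>orthant M. 0 \<le> f x"
    and lam_nonneg: "\<forall>k<M. 0 \<le> lam k"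
    and C_def: "C = (LINT y:orthant M | PiM {..<M} (\<lambda>_. lborel).
                      (\<Prod>k<M. y k ^ n k) * exp (- (\<Sum>k<M. lam k * y k)) * f y)"
    and C_nz: "C \<noteq> 0"
    and fET_def: "fET = (\<lambda>x. (\<Prod>k<M. x k ^ n k) * exp (- (\<Sum>k<M. lam k * x k)) * f x / C)"
  shows "fET \<in> MMEam M
    \<and> C = (\<Sum>i\<in>idx_set M L. p i * (\<Prod>k<M. C_ET (\<alpha> (i k)) (T (i k)) (t (i k)) (n k) (lam k)))
    \<and> (\<forall>x\<in>orthant M. fET x =
         (\<Sum>i\<in>idx_set M L.
            (p i * (\<Prod>k<M. C_ET (\<alpha> (i k)) (T (i k)) (t (i k)) (n k) (lam k)) / C)
            * (\<Prod>k<M. f_ET (\<alpha> (i k)) (T (i k)) (t (i k)) (n k) (lam k) (x k))))"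
proof -
  have C_eq: "C = (\<Sum>i\<in>idx_set M L. p i * (\<Prod>k<M. C_ET (\<alpha> (i k)) (T (i k)) (t (i k)) (n k) (lam k)))"
    unfolding C_def f_def by (rule set_integral_orthant_esscher_mme_sum[OF ME lam_nonneg])
  have fET_eq: "fET x = (\<Sum>i\<in>idx_set M L. (p i * (\<Prod>k<M. C_ET (\<alpha> (i k)) (T (i k)) (t (i k)) (n k) (lam k)) / C)
      * (\<Prod>k<M. f_ET (\<alpha> (i k)) (T (i k)) (t (i k)) (n k) (lam k) (x k)))" for x
    unfolding fET_def f_def by (rule esscher_mme_sum_eq[OF ME lam_nonneg])
  have "0 \<le> indicator (orthant M) y *\<^sub>R ((\<Prod>k<M. y k ^ n k) * exp (- (\<Sum>k<M. lam k * y k)) * f y)" for y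
    using f_nonneg by (cases "y \<in> orthant M") (auto simp: orthant_def intro!: mult_nonneg_nonneg prod_nonneg)
  then have "C \<ge> 0" unfolding C_def set_lebesgue_integral_def by (rule Bochner_Integration.integral_nonneg)
  with C_nz have C_pos: "C > 0" by simp
  have "fET \<in> MMEam M"
  proof (rule coordinatewise_mme_sum_in_MMEam[OF \<open>M > 0\<close> \<open>L > 0\<close>])
    show "is_me_density (f_ET (\<alpha> j) (T j) (t j) (n k) (lam k))" if "k < M" "j \<in> {1..L}" for k j
      using f_ET_is_me_density ME lam_nonneg that by blast
    show "(\<Sum>i\<in>idx_set M L. p i * (\<Prod>k<M. C_ET (\<alpha> (i k)) (T (i k)) (t (i k)) (n k) (lam k)) / C) = 1"
      using C_eq C_nz by (simp add: sum_divide_distrib[symmetric])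
    show "0 \<le> fET x" if "x \<in> orthant M" for x
      using f_nonneg that C_pos unfolding fET_def orthant_def
      by (auto intro!: divide_nonneg_pos mult_nonneg_nonneg prod_nonneg)
  qed (rule fET_eq)
  with C_eq fET_eq show ?thesis by blast
qed

end
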